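(* Let $X$ be a noncommutative space embedded in $\mathcal A^m$ and $e=\tilde E^j\ast E_j$. Equip $TX=\mathcal A^m\ast e$ and $\tilde TX=e\ast{}^m\!\mathcal A$ with the canonical connections $\nabla_i\zeta=\partial_i\zeta-\zeta\ast\partial_ie$ and $\tilde\nabla_i\xi=\partial_i\xi-\partial_i(e)\ast\xi$. Then for all $i,j$: $$\nabla_iE_j=\Gamma_{ij}^k\ast E_k,\qquad \tilde\nabla_i\tilde E^j=-\tilde E^k\ast\Gamma_{ki}^j,$$ and equivalently $\nabla_iE^j=-\tilde\Gamma^j_{ik}\ast E^k$ and $\tilde\nabla_i(E_j)^t=(E_k)^t\ast\tilde\Gamma^k_{ij}$, where $E^j=g^{jk}\ast E_k$.
   Context: $\mathcal A$ denotes the Moyal algebra: for $U\subset\mathbb R^n$ open with coordinates $t$ and $\hbar$ a formal real indeterminate, $\mathcal A$ is the set of formal power series $\sum_{i\ge0}f_i\hbar^i$ with real smooth coefficients on $U$, with product $(f\ast g)(t)=\lim_{t'\to t}\exp\big(\hbar\sum_{i,j}\theta_{ij}\frac{\partial}{\partial t^i}\frac{\partial}{\partial t'^j}\big)f(t)g(t')$ for a fixed constant real skew-symmetric $\theta$ (associative, unital; $\partial_i=\partial/\partial t^i$ are derivations, acting entrywise on matrices). Matrices over $\mathcal A$ are multiplied using $\ast$; $\mathcal A^m$ row vectors, ${}^m\!\mathcal A$ column vectors. Einstein summation. For $X=(X^1,\dots,X^m)\in\mathcal A^m$, $g_{ij}=\sum_\alpha\partial_iX^\alpha\ast\partial_jX^\alpha$;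 $X$ is a noncommutative space embedded in $\mathcal A^m$ if $(g_{ij})$ is invertible, inverse $(g^{ij})$. $E_i=\partial_iX$, $(E_i)^t$ its transpose, $\tilde E^i=(E_j)^t\ast g^{ji}$. Define ${}_c\Gamma_{ijl}=\tfrac12(\partial_ig_{jl}+\partial_jg_{li}-\partial_lg_{ji})$, $\Upsilon_{ijl}=\tfrac12(\partial_i(E_j)\ast(E_l)^t-E_l\ast\partial_i(E_j)^t)$, $\Gamma_{ijl}={}_c\Gamma_{ijl}+\Upsilon_{ijl}$, $\tilde\Gamma_{ijl}={}_c\Gamma_{ijl}-\Upsilon_{ijl}$, $\Gamma_{ij}^k=\Gamma_{ijl}\ast g^{lk}$, $\tilde\Gamma_{ij}^k=g^{kl}\ast\tilde\Gamma_{ijl}$. *)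

theory Defs
  imports "HOL-Analysis.Analysis"
begin

text \<open>An element of the Moyal
algebra is a formal power series in hbar, represented by its coefficient sequence
(coefficient of hbar^p is F p), each coefficient a real function on R^n which is
smooth on U; only its values on U matter (equalities are taken on U).\<close>

type_synonym 'n moyal = "nat \<Rightarrow> real^'n \<Rightarrow> real"

definition pd :: "'n::finite \<Rightarrow> (real^'n \<Rightarrow> real) \<Rightarrow> real^'n \<Rightarrow> real" where
  "pd i f t = deriv (\<lambda>s. f (t + s *\<^sub>R axis i 1)) 0"

primrec pds :: "'n::finite list \<Rightarrow> (real^'n \<Rightarrow> real) \<Rightarrow> real^'n \<Rightarrow> real" where
  "pds [] f = f"
| "pds (i # is) f = pd i (pds is f)"

definition smooth_on :: "(real^'n::finite) set \<Rightarrow> (real^'n \<Rightarrow> real) \<Rightarrow> bool" where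
  "smooth_on U f \<longleftrightarrow> (\<forall>is. continuous_on U (pds is f) \<and>
      (\<forall>i. \<forall>t\<in>U. (\<lambda>s. pds is f (t + s *\<^sub>R axis i 1)) differentiable (at 0)))"

definition moyal_elem :: "(real^'n::finite) set \<Rightarrow> 'n moyal \<Rightarrow> bool" where
  "moyal_elem U F \<longleftrightarrow> (\<forall>p. smooth_on U (F p))"

definition eqU :: "(real^'n::finite) set \<Rightarrow> 'n moyal \<Rightarrow> 'n moyal \<Rightarrow> bool" where
  "eqU U F G \<longleftrightarrow> (\<forall>p. \<forall>t\<in>U. F p t = G p t)"

definition madd :: "'n moyal \<Rightarrow> 'n moyal \<Rightarrow> 'n moyal" where
  "madd F G = (\<lambda>p t. F p t + G p t)"

definition mdiff :: "'n moyal \<Rightarrow> 'n moyal \<Rightarrow> 'n moyal" where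
  "mdiff F G = (\<lambda>p t. F p t - G p t)"

definition mneg :: "'n moyal \<Rightarrow> 'n moyal" where
  "mneg F = (\<lambda>p t. - F p t)"

definition msmult :: "real \<Rightarrow> 'n moyal \<Rightarrow> 'n moyal" where
  "msmult c F = (\<lambda>p t. c * F p t)"

definition msum :: "('b \<Rightarrow> 'n moyal) \<Rightarrow> 'b set \<Rightarrow> 'n moyal" where
  "msum F S = (\<lambda>p t. \<Sum>x\<in>S. F x p t)"

definition mD :: "'n::finite \<Rightarrow> 'n moyal \<Rightarrow> 'n moyal" where
  "mD i F = (\<lambda>p. pd i (F p))"

text \<open>Moyal product: the hbar^p coefficient of
  exp(hbar \<Sum> theta_ij d/dt^i d/dt'^j) f(t) g(t') at t' = t, i.e.
  \<Sum>_{c+a+b=p} 1/c! \<Sum>_{i_1..i_c, j_1..j_c} theta_{i_1 j_1}...theta_{i_c j_c}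
     (d_{i_1}..d_{i_c} f_a)(d_{j_1}..d_{j_c} g_b).\<close>
definition mstar :: "('n::finite \<Rightarrow> 'n \<Rightarrow> real) \<Rightarrow> 'n moyal \<Rightarrow> 'n moyal \<Rightarrow> 'n moyal" where
  "mstar \<theta> F G = (\<lambda>p t. \<Sum>c\<le>p. \<Sum>a\<le>p - c.
      (1 / fact c) * (\<Sum>is\<in>{xs. length xs = c}. \<Sum>js\<in>{xs. length xs = c}.
         (\<Prod>k<c. \<theta> (is ! k) (js ! k)) * pds is (F a) t * pds js (G (p - c - a)) t))"

definition mone :: "'n moyal" where
  "mone = (\<lambda>p t. if p = 0 then 1 else 0)"

definition mzero :: "'n moyal" where
  "mzero = (\<lambda>p t. 0)"

text \<open>X :: 'm \<Rightarrow> 'n moyal is a row vector in A^m.  Coordinate indices i,j,k,l range over 'n,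
ambient indices alpha, beta over 'm.  ginv is (g^{ij}).\<close>

definition metric :: "('n::finite \<Rightarrow> 'n \<Rightarrow> real) \<Rightarrow> ('m::finite \<Rightarrow> 'n moyal) \<Rightarrow> 'n \<Rightarrow> 'n \<Rightarrow> 'n moyal" where
  "metric \<theta> X i j = msum (\<lambda>\<alpha>. mstar \<theta> (mD i (X \<alpha>)) (mD j (X \<alpha>))) UNIV"

definition Evec :: "('m::finite \<Rightarrow> 'n::finite moyal) \<Rightarrow> 'n \<Rightarrow> 'm \<Rightarrow> 'n moyal" where
  "Evec X i \<alpha> = mD i (X \<alpha>)"

definition Etil :: "('n::finite \<Rightarrow> 'n \<Rightarrow> real) \<Rightarrow> ('m::finite \<Rightarrow> 'n moyal) \<Rightarrow> ('n \<Rightarrow> 'n \<Rightarrow> 'n moyal)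
    \<Rightarrow> 'n \<Rightarrow> 'm \<Rightarrow> 'n moyal" where
  "Etil \<theta> X ginv i \<alpha> = msum (\<lambda>j. mstar \<theta> (Evec X j \<alpha>) (ginv j i)) UNIV"

definition Eup :: "('n::finite \<Rightarrow> 'n \<Rightarrow> real) \<Rightarrow> ('m::finite \<Rightarrow> 'n moyal) \<Rightarrow> ('n \<Rightarrow> 'n \<Rightarrow> 'n moyal)
    \<Rightarrow> 'n \<Rightarrow> 'm \<Rightarrow> 'n moyal" where
  "Eup \<theta> X ginv j \<alpha> = msum (\<lambda>k. mstar \<theta> (ginv j k) (Evec X k \<alpha>)) UNIV"

definition eproj :: "('n::finite \<Rightarrow> 'n \<Rightarrow> real) \<Rightarrow> ('m::finite \<Rightarrow> 'n moyal) \<Rightarrow> ('n \<Rightarrow> 'n \<Rightarrow> 'n moyal)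
    \<Rightarrow> 'm \<Rightarrow> 'm \<Rightarrow> 'n moyal" where
  "eproj \<theta> X ginv \<alpha> \<beta> = msum (\<lambda>j. mstar \<theta> (Etil \<theta> X ginv j \<alpha>) (Evec X j \<beta>)) UNIV"

definition nabla :: "('n::finite \<Rightarrow> 'n \<Rightarrow> real) \<Rightarrow> ('m::finite \<Rightarrow> 'n moyal) \<Rightarrow> ('n \<Rightarrow> 'n \<Rightarrow> 'n moyal)
    \<Rightarrow> 'n \<Rightarrow> ('m \<Rightarrow> 'n moyal) \<Rightarrow> 'm \<Rightarrow> 'n moyal" where
  "nabla \<theta> X ginv i \<zeta> \<beta> = mdiff (mD i (\<zeta> \<beta>))
      (msum (\<lambda>\<alpha>. mstar \<theta> (\<zeta> \<alpha>) (mD i (eproj \<theta> X ginv \<alpha> \<beta>))) UNIV)"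

definition nablat :: "('n::finite \<Rightarrow> 'n \<Rightarrow> real) \<Rightarrow> ('m::finite \<Rightarrow> 'n moyal) \<Rightarrow> ('n \<Rightarrow> 'n \<Rightarrow> 'n moyal)
    \<Rightarrow> 'n \<Rightarrow> ('m \<Rightarrow> 'n moyal) \<Rightarrow> 'm \<Rightarrow> 'n moyal" where
  "nablat \<theta> X ginv i \<xi> \<alpha> = mdiff (mD i (\<xi> \<alpha>))
      (msum (\<lambda>\<beta>. mstar \<theta> (mD i (eproj \<theta> X ginv \<alpha> \<beta>)) (\<xi> \<beta>)) UNIV)"

definition cGamma :: "('n::finite \<Rightarrow> 'n \<Rightarrow> real) \<Rightarrow> ('m::finite \<Rightarrow> 'n moyal) \<Rightarrow> 'n \<Rightarrow> 'n \<Rightarrow> 'n \<Rightarrow> 'n moyal" where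
  "cGamma \<theta> X i j l = msmult (1/2)
     (mdiff (madd (mD i (metric \<theta> X j l)) (mD j (metric \<theta> X l i))) (mD l (metric \<theta> X j i)))"

definition Upsilon :: "('n::finite \<Rightarrow> 'n \<Rightarrow> real) \<Rightarrow> ('m::finite \<Rightarrow> 'n moyal) \<Rightarrow> 'n \<Rightarrow> 'n \<Rightarrow> 'n \<Rightarrow> 'n moyal" where
  "Upsilon \<theta> X i j l = msmult (1/2)
     (mdiff (msum (\<lambda>\<alpha>. mstar \<theta> (mD i (Evec X j \<alpha>)) (Evec X l \<alpha>)) UNIV)
            (msum (\<lambda>\<alpha>. mstar \<theta> (Evec X l \<alpha>) (mD i (Evec X j \<alpha>))) UNIV))"

definition Gamma_low :: "('n::finite \<Rightarrow> 'n \<Rightarrow> real) \<Rightarrow> ('m::finite \<Rightarrow> 'n moyal) \<Rightarrow> 'n \<Rightarrow> 'n \<Rightarrow> 'n \<Rightarrow> 'n moyal" where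
  "Gamma_low \<theta> X i j l = madd (cGamma \<theta> X i j l) (Upsilon \<theta> X i j l)"

definition Gammat_low :: "('n::finite \<Rightarrow> 'n \<Rightarrow> real) \<Rightarrow> ('m::finite \<Rightarrow> 'n moyal) \<Rightarrow> 'n \<Rightarrow> 'n \<Rightarrow> 'n \<Rightarrow> 'n moyal" where
  "Gammat_low \<theta> X i j l = mdiff (cGamma \<theta> X i j l) (Upsilon \<theta> X i j l)"

definition Gamma_up :: "('n::finite \<Rightarrow> 'n \<Rightarrow> real) \<Rightarrow> ('m::finite \<Rightarrow> 'n moyal) \<Rightarrow> ('n \<Rightarrow> 'n \<Rightarrow> 'n moyal)
    \<Rightarrow> 'n \<Rightarrow> 'n \<Rightarrow> 'n \<Rightarrow> 'n moyal" where
  "Gamma_up \<theta> X ginv i j k = msum (\<lambda>l. mstar \<theta> (Gamma_low \<theta> X i j l) (ginv l k)) UNIV"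

definition Gammat_up :: "('n::finite \<Rightarrow> 'n \<Rightarrow> real) \<Rightarrow> ('m::finite \<Rightarrow> 'n moyal) \<Rightarrow> ('n \<Rightarrow> 'n \<Rightarrow> 'n moyal)
    \<Rightarrow> 'n \<Rightarrow> 'n \<Rightarrow> 'n \<Rightarrow> 'n moyal" where
  "Gammat_up \<theta> X ginv i j k = msum (\<lambda>l. mstar \<theta> (ginv k l) (Gammat_low \<theta> X i j l)) UNIV"

end

theory Submission
  imports Defs
begin

(*
  Once the Moyal algebra is known to be an associative unital algebra on which the partial
  derivatives act as commuting derivations, the four formulas are pure algebra: from
  g * g^-1 = g^-1 * g = 1 one gets E_j * tilde E^k = delta_j^k, hence e * E_j = E_j,
  E_j * e = E_j and e * tilde E^k = tilde E^k; the Leibniz rule turns the connections into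
  d_i(E_j) * e and e * d_i(tilde E^j); finally Gamma_ijl = d_i E_j * (E_l)^t and
  tilde Gamma_ijl = E_l * d_i (E_j)^t because d_i E_j = d_j E_i.
*)

abbreviation ax :: "'n::finite \<Rightarrow> real^'n" where "ax i \<equiv> axis i (1::real)"

section \<open>Partial derivatives of smooth functions on an open set\<close>

lemma eventually_line_in_open:
  assumes "open U" "t \<in> U"
  shows "\<forall>\<^sub>F s in nhds 0. t + s *\<^sub>R ax i \<in> U"
proof -
  obtain e where e: "e > 0" "ball t e \<subseteq> U" using assms open_contains_ball by blast
  show ?thesis unfolding eventually_nhds_metric
    by (rule exI[of _ e]) (use e in \<open>auto simp: dist_norm\<close>)
qed

lemma pd_local:
  assumes "open U" "t \<in> U" "\<forall>x\<in>U. f x = g x"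
  shows "pd i f t = pd i g t"
  unfolding pd_def
  by (rule deriv_cong_ev[OF eventually_mono[OF eventually_line_in_open[OF assms(1,2)]]])
    (use assms in auto)

lemma pds_local:
  assumes "open U" "\<forall>x\<in>U. f x = g x" "t \<in> U"
  shows "pds is f t = pds is g t"
  using assms(3)
proof (induction "is" arbitrary: t)
  case Nil then show ?case using assms by simp
next
  case (Cons i "is") then show ?case using pd_local[OF assms(1) Cons(2)] by simp
qed

lemma line_differentiable_cong:
  fixes f g :: "real^'n::finite \<Rightarrow> real"
  assumes "open U" "t \<in> U" "\<forall>x\<in>U. f x = g x"
    "(\<lambda>s. g (t + s *\<^sub>R ax i)) differentiable (at 0)"
  shows "(\<lambda>s. f (t + s *\<^sub>R ax i)) differentiable (at 0)"
proof -
  have ev: "\<forall>\<^sub>F s in nhds 0. f (t + s *\<^sub>R ax i) = g (t + s *\<^sub>R ax i)"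
    by (rule eventually_mono[OF eventually_line_in_open[OF assms(1,2)]]) (use assms in auto)
  from assms(4) obtain D where "((\<lambda>s. g (t + s *\<^sub>R ax i)) has_real_derivative D) (at 0)"
    by (auto simp: real_differentiable_def)
  then have "((\<lambda>s. f (t + s *\<^sub>R ax i)) has_real_derivative D) (at 0)"
    using DERIV_cong_ev[OF refl ev refl] by simp
  then show ?thesis by (auto simp: real_differentiable_def)
qed

lemma pd_has_derivative:
  assumes "(\<lambda>s. h (t + s *\<^sub>R ax i)) differentiable (at 0)"
  shows "((\<lambda>s. h (t + s *\<^sub>R ax i)) has_field_derivative pd i h t) (at 0)"
  using assms unfolding pd_def by (simp add: DERIV_deriv_iff_real_differentiable)

lemma pds_append: "pds (xs @ ys) f = pds xs (pds ys f)"
  by (induction xs) auto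

lemma smooth_pds: "smooth_on U f \<Longrightarrow> smooth_on U (pds is f)"
  unfolding smooth_on_def pds_append[symmetric] by blast

lemma smooth_pd: "smooth_on U f \<Longrightarrow> smooth_on U (pd i f)"
  using smooth_pds[of U f "[i]"] by simp

lemma smooth_line_differentiable:
  "smooth_on U f \<Longrightarrow> t \<in> U \<Longrightarrow> (\<lambda>s. f (t + s *\<^sub>R ax i)) differentiable (at 0)"
  unfolding smooth_on_def by (drule spec[of _ "[]"]) simp

lemma smooth_continuous: "smooth_on U f \<Longrightarrow> continuous_on U f"
  unfolding smooth_on_def by (drule spec[of _ "[]"]) simp

lemma pds_const: "pds is (\<lambda>x. c) x = (if is = [] then c else 0)"
proof -
  have "pds is (\<lambda>x. c) = (if is = [] then (\<lambda>x. c) else (\<lambda>x. 0))"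
    by (induction "is") (auto simp: pd_def)
  then show ?thesis by simp
qed

lemma smooth_const: "smooth_on U (\<lambda>x. c)"
  unfolding smooth_on_def pds_const by (auto simp: continuous_on_const)

text \<open>To see that smooth functions are closed under sums and products we use the class
  of finite sums of products of smooth functions: it is stable under partial derivatives,
  and its members are continuous and partially differentiable, hence smooth.\<close>

definition sum_of_products_on :: "(real^'n::finite) set \<Rightarrow> (real^'n \<Rightarrow> real) \<Rightarrow> bool" where
  "sum_of_products_on U h \<longleftrightarrow> (\<exists>L. (\<forall>p\<in>set L. smooth_on U (fst p) \<and> smooth_on U (snd p)) \<and>
       (\<forall>x\<in>U. h x = (\<Sum>p\<leftarrow>L. fst p x * snd p x)))"

lemma sum_products_continuous:
  assumes "\<forall>p\<in>set L. smooth_on U (fst p) \<and> smooth_on U (snd p)"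
  shows "continuous_on U (\<lambda>x. \<Sum>p\<leftarrow>L. fst p x * snd p x)"
  using assms
proof (induction L)
  case Nil then show ?case by simp
next
  case (Cons a L)
  then have c1: "continuous_on U (fst a)" "continuous_on U (snd a)" by (auto intro: smooth_continuous)
  from continuous_on_add[OF continuous_on_mult[OF c1] Cons.IH] Cons.prems show ?case by simp
qed

lemma sum_products_has_derivative:
  assumes "\<forall>p\<in>set L. smooth_on U (fst p) \<and> smooth_on U (snd p)" "t \<in> U"
  shows "((\<lambda>s. \<Sum>p\<leftarrow>L. fst p (t + s *\<^sub>R ax i) * snd p (t + s *\<^sub>R ax i)) has_field_derivative
          (\<Sum>p\<leftarrow>L. pd i (fst p) t * snd p t + fst p t * pd i (snd p) t)) (at 0)"
  using assms(1)
proof (induction L)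
  case Nil then show ?case by simp
next
  case (Cons a L)
  have a: "smooth_on U (fst a)" "smooth_on U (snd a)" using Cons by auto
  have d1: "((\<lambda>s. fst a (t + s *\<^sub>R ax i)) has_field_derivative pd i (fst a) t) (at 0)"
    by (rule pd_has_derivative[OF smooth_line_differentiable[OF a(1) assms(2)]])
  have d2: "((\<lambda>s. snd a (t + s *\<^sub>R ax i)) has_field_derivative pd i (snd a) t) (at 0)"
    by (rule pd_has_derivative[OF smooth_line_differentiable[OF a(2) assms(2)]])
  have "((\<lambda>s. fst a (t + s *\<^sub>R ax i) * snd a (t + s *\<^sub>R ax i)) has_field_derivative
      pd i (fst a) t * snd a (t + 0 *\<^sub>R ax i) + pd i (snd a) t * fst a (t + 0 *\<^sub>R ax i)) (at 0)"
    by (rule DERIV_mult[OF d1 d2])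
  then have "((\<lambda>s. fst a (t + s *\<^sub>R ax i) * snd a (t + s *\<^sub>R ax i)) has_field_derivative
      pd i (fst a) t * snd a t + fst a t * pd i (snd a) t) (at 0)" by (simp add: mult.commute)
  from DERIV_add[OF this Cons.IH] Cons.prems show ?case by simp
qed

lemma sum_of_products_first_order:
  assumes "open U" "sum_of_products_on U h"
  shows "continuous_on U h \<and> (\<forall>i. \<forall>t\<in>U. (\<lambda>s. h (t + s *\<^sub>R ax i)) differentiable (at 0))"
proof -
  obtain L where L: "\<forall>p\<in>set L. smooth_on U (fst p) \<and> smooth_on U (snd p)"
      "\<forall>x\<in>U. h x = (\<Sum>p\<leftarrow>L. fst p x * snd p x)"
    using assms(2) unfolding sum_of_products_on_def by blast
  have "continuous_on U h"
    using continuous_on_cong[THEN iffD1, OF refl _ sum_products_continuous[OF L(1)]] L(2) by auto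
  moreover have "(\<lambda>s. h (t + s *\<^sub>R ax i)) differentiable (at 0)" if t: "t \<in> U" for i t
    by (rule line_differentiable_cong[OF assms(1) t L(2)])
      (use sum_products_has_derivative[OF L(1) t] in \<open>auto simp: real_differentiable_def\<close>)
  ultimately show ?thesis by blast
qed

lemma pd_sum_products:
  assumes "open U" "\<forall>p\<in>set L. smooth_on U (fst p) \<and> smooth_on U (snd p)" "t \<in> U"
  shows "pd i (\<lambda>x. \<Sum>p\<leftarrow>L. fst p x * snd p x) t =
     (\<Sum>p\<leftarrow>L. pd i (fst p) t * snd p t + fst p t * pd i (snd p) t)"
  using sum_products_has_derivative[OF assms(2,3), of i] unfolding pd_def by (simp add: DERIV_imp_deriv)

lemma sum_of_products_pd:
  assumes "open U" "sum_of_products_on U h" shows "sum_of_products_on U (pd i h)"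
proof -
  obtain L where L: "\<forall>p\<in>set L. smooth_on U (fst p) \<and> smooth_on U (snd p)"
      "\<forall>x\<in>U. h x = (\<Sum>p\<leftarrow>L. fst p x * snd p x)"
    using assms(2) unfolding sum_of_products_on_def by blast
  define L2 where "L2 = map (\<lambda>p. (pd i (fst p), snd p)) L @ map (\<lambda>p. (fst p, pd i (snd p))) L"
  have "\<forall>p\<in>set L2. smooth_on U (fst p) \<and> smooth_on U (snd p)"
    using L(1) by (auto simp: L2_def smooth_pd)
  moreover have "\<forall>x\<in>U. pd i h x = (\<Sum>p\<leftarrow>L2. fst p x * snd p x)"
  proof
    fix x assume x: "x \<in> U"
    have "pd i h x = pd i (\<lambda>x. \<Sum>p\<leftarrow>L. fst p x * snd p x) x"
      by (rule pd_local[OF assms(1) x L(2)])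
    also have "\<dots> = (\<Sum>p\<leftarrow>L. pd i (fst p) x * snd p x + fst p x * pd i (snd p) x)"
      by (rule pd_sum_products[OF assms(1) L(1) x])
    also have "\<dots> = (\<Sum>p\<leftarrow>L2. fst p x * snd p x)"
      by (simp add: L2_def sum_list_addf o_def)
    finally show "pd i h x = (\<Sum>p\<leftarrow>L2. fst p x * snd p x)" .
  qed
  ultimately show ?thesis unfolding sum_of_products_on_def by blast
qed

lemma sum_of_products_smooth:
  assumes "open U" "sum_of_products_on U h" shows "smooth_on U h"
proof -
  have "sum_of_products_on U (pds is h)" for "is"
    by (induction "is") (auto simp: assms sum_of_products_pd)
  then show ?thesis
    unfolding smooth_on_def using sum_of_products_first_order[OF assms(1)] by blast
qed

lemma smooth_mult:
  assumes "open U" "smooth_on U f" "smooth_on U g"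
  shows "smooth_on U (\<lambda>x. f x * g x)"
  by (rule sum_of_products_smooth[OF assms(1)])
    (unfold sum_of_products_on_def, rule exI[of _ "[(f,g)]"], use assms in auto)

lemma smooth_add:
  assumes "open U" "smooth_on U f" "smooth_on U g"
  shows "smooth_on U (\<lambda>x. f x + g x)"
  by (rule sum_of_products_smooth[OF assms(1)])
    (unfold sum_of_products_on_def, rule exI[of _ "[(f,\<lambda>x. 1),(g, \<lambda>x. 1)]"],
      use assms smooth_const in auto)

lemma smooth_cmult:
  assumes "open U" "smooth_on U f"
  shows "smooth_on U (\<lambda>x. c * f x)"
  using smooth_mult[OF assms(1) smooth_const assms(2)] .

lemma smooth_local:
  assumes "open U" "smooth_on U f" "\<forall>x\<in>U. g x = f x"
  shows "smooth_on U g"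
  by (rule sum_of_products_smooth[OF assms(1)])
    (unfold sum_of_products_on_def, rule exI[of _ "[(f,\<lambda>x. 1)]"], use assms smooth_const in auto)

lemma smooth_sum:
  assumes "open U" "\<And>k. k \<in> S \<Longrightarrow> smooth_on U (F k)"
  shows "smooth_on U (\<lambda>x. \<Sum>k\<in>S. F k x)"
  using assms(2)
proof (induction S rule: infinite_finite_induct)
  case (infinite A) then show ?case by (simp add: smooth_const)
next
  case empty then show ?case by (simp add: smooth_const)
next
  case (insert a A)
  have "smooth_on U (\<lambda>x. F a x + (\<Sum>k\<in>A. F k x))"
    by (rule smooth_add[OF assms(1)]) (use insert in auto)
  then show ?case using insert(1,2) by simp
qed

lemma pd_mult:
  assumes "smooth_on U f" "smooth_on U g" "t \<in> U"
  shows "pd i (\<lambda>x. f x * g x) t = pd i f t * g t + f t * pd i g t"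
proof -
  have "((\<lambda>s. f (t + s *\<^sub>R ax i) * g (t + s *\<^sub>R ax i)) has_field_derivative
      pd i f t * g (t + 0 *\<^sub>R ax i) + pd i g t * f (t + 0 *\<^sub>R ax i)) (at 0)"
    by (rule DERIV_mult[OF pd_has_derivative[OF smooth_line_differentiable[OF assms(1,3)]]
          pd_has_derivative[OF smooth_line_differentiable[OF assms(2,3)]]])
  then show ?thesis unfolding pd_def by (simp add: DERIV_imp_deriv mult.commute)
qed

lemma pd_sum:
  assumes "finite S" "\<And>k. k \<in> S \<Longrightarrow> smooth_on U (F k)" "t \<in> U"
  shows "pd i (\<lambda>x. \<Sum>k\<in>S. F k x) t = (\<Sum>k\<in>S. pd i (F k) t)"
proof -
  have "((\<lambda>s. \<Sum>k\<in>S. F k (t + s *\<^sub>R ax i)) has_field_derivative (\<Sum>k\<in>S. pd i (F k) t)) (at 0)"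
    by (rule DERIV_sum) (rule pd_has_derivative[OF smooth_line_differentiable[OF assms(2) assms(3)]])
  then show ?thesis unfolding pd_def by (simp add: DERIV_imp_deriv)
qed

lemma pd_cmult:
  assumes "smooth_on U f" "t \<in> U"
  shows "pd i (\<lambda>x. c * f x) t = c * pd i f t"
  using pd_mult[OF smooth_const[of U c] assms, of i] by (simp add: pd_def)

lemma pd_scaled_product:
  assumes U: "open U" and "smooth_on U u" "smooth_on U v" "t \<in> U"
  shows "pd i (\<lambda>x. c * u x * v x) t = c * (pd i u t * v t + u t * pd i v t)"
proof -
  have "pd i (\<lambda>x. c * u x * v x) t = pd i (\<lambda>x. c * (u x * v x)) t" by (simp add: mult.assoc)
  also have "\<dots> = c * pd i (\<lambda>x. u x * v x) t"
    by (rule pd_cmult) (use assms in \<open>auto intro: smooth_mult[OF U]\<close>)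
  also have "\<dots> = c * (pd i u t * v t + u t * pd i v t)" using pd_mult[OF assms(2-4)] by simp
  finally show ?thesis .
qed

section \<open>Symmetry of second partial derivatives\<close>

lemma pd_along_line:
  assumes "smooth_on U g" "q + x0 *\<^sub>R ax i \<in> U"
  shows "((\<lambda>x. g (q + x *\<^sub>R ax i)) has_field_derivative pd i g (q + x0 *\<^sub>R ax i)) (at x0)"
proof -
  let ?p = "q + x0 *\<^sub>R ax i"
  have d: "((\<lambda>s. g (?p + s *\<^sub>R ax i)) has_field_derivative pd i g ?p) (at 0)"
    by (rule pd_has_derivative[OF smooth_line_differentiable[OF assms]])
  have e: "(\<lambda>s. g (?p + s *\<^sub>R ax i)) = (\<lambda>s. (\<lambda>x. g (q + x *\<^sub>R ax i)) (s + x0))"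
    by (auto simp: algebra_simps)
  from d have "((\<lambda>s. (\<lambda>x. g (q + x *\<^sub>R ax i)) (s + x0)) has_field_derivative pd i g ?p) (at 0)"
    by (simp only: e)
  then have "((\<lambda>x. g (q + x *\<^sub>R ax i)) has_field_derivative pd i g ?p) (at (0 + x0))"
    by (simp only: DERIV_shift)
  then show ?thesis by simp
qed

lemma mvt_line:
  assumes "smooth_on U g" "h > 0"
    "\<And>x. 0 \<le> x \<Longrightarrow> x \<le> h \<Longrightarrow> q + x *\<^sub>R ax i \<in> U"
  shows "\<exists>\<xi>. 0 < \<xi> \<and> \<xi> < h \<and> g (q + h *\<^sub>R ax i) - g q = h * pd i g (q + \<xi> *\<^sub>R ax i)"
proof -
  have "\<exists>z. 0 < z \<and> z < h \<and> (\<lambda>x. g (q + x *\<^sub>R ax i)) h - (\<lambda>x. g (q + x *\<^sub>R ax i)) 0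
     = (h - 0) * (\<lambda>x. pd i g (q + x *\<^sub>R ax i)) z"
    by (rule MVT2[OF assms(2)]) (intro pd_along_line[OF assms(1)]; use assms(3) in blast)
  then show ?thesis by simp
qed

lemma mvt_line_difference:
  assumes "smooth_on U g" "h > 0"
    "\<And>x. 0 \<le> x \<Longrightarrow> x \<le> h \<Longrightarrow> q1 + x *\<^sub>R ax i \<in> U \<and> q0 + x *\<^sub>R ax i \<in> U"
  shows "\<exists>\<xi>. 0 < \<xi> \<and> \<xi> < h \<and> (g (q1 + h *\<^sub>R ax i) - g (q0 + h *\<^sub>R ax i)) - (g q1 - g q0)
      = h * (pd i g (q1 + \<xi> *\<^sub>R ax i) - pd i g (q0 + \<xi> *\<^sub>R ax i))"
proof -
  have "\<exists>z. 0 < z \<and> z < h \<and> ((\<lambda>x. g (q1 + x *\<^sub>R ax i) - g (q0 + x *\<^sub>R ax i)) h -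
     (\<lambda>x. g (q1 + x *\<^sub>R ax i) - g (q0 + x *\<^sub>R ax i)) 0
     = (h - 0) * (\<lambda>x. pd i g (q1 + x *\<^sub>R ax i) - pd i g (q0 + x *\<^sub>R ax i)) z)"
    by (rule MVT2[OF assms(2)]) (intro DERIV_diff pd_along_line[OF assms(1)]; use assms(3) in blast)
  then show ?thesis by simp
qed

lemma square_near_point:
  assumes "0 \<le> x" "x \<le> h" "0 \<le> y" "y \<le> h"
  shows "dist (t + x *\<^sub>R ax i + y *\<^sub>R ax j) t \<le> 2 * h"
proof -
  have "norm (x *\<^sub>R ax i + y *\<^sub>R ax j) \<le> norm (x *\<^sub>R ax i) + norm (y *\<^sub>R ax j)"
    by (rule norm_triangle_ineq)
  also have "\<dots> = x + y" using assms by simp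
  finally show ?thesis using assms by (simp add: dist_norm add.assoc)
qed

text \<open>The second difference
  f(t + h a + h b) - f(t + h a) - f(t + h b) + f(t)  (a, b the coordinate directions i, j)
  equals h^2 d_j d_i f at one point and h^2 d_i d_j f at another, both within 2h of t.\<close>

lemma mixed_partials_meet:
  assumes f: "smooth_on U f" and r: "ball t r \<subseteq> U" and h: "h > 0" "2 * h < r"
  shows "\<exists>p q. dist p t \<le> 2 * h \<and> dist q t \<le> 2 * h \<and> p \<in> U \<and> q \<in> U
            \<and> pd j (pd i f) p = pd i (pd j f) q"
proof -
  let ?a = "ax i" and ?b = "ax j"
  have inU: "t + x *\<^sub>R ?a + y *\<^sub>R ?b \<in> U" if "0 \<le> x" "x \<le> h" "0 \<le> y" "y \<le> h" for x y
    using square_near_point[OF that, of t i j] h r by (auto simp: dist_commute)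
  define D where "D = f (t + h *\<^sub>R ?a + h *\<^sub>R ?b) - f (t + h *\<^sub>R ?a) - f (t + h *\<^sub>R ?b) + f t"
  have U1: "(t + h *\<^sub>R ?b) + x *\<^sub>R ?a \<in> U \<and> t + x *\<^sub>R ?a \<in> U" if "0 \<le> x" "x \<le> h" for x
    using inU[OF that, of h] inU[OF that, of 0] h(1) by (simp add: algebra_simps)
  obtain \<xi> where \<xi>: "0 < \<xi>" "\<xi> < h"
    "(f ((t + h *\<^sub>R ?b) + h *\<^sub>R ?a) - f (t + h *\<^sub>R ?a)) - (f (t + h *\<^sub>R ?b) - f t)
      = h * (pd i f ((t + h *\<^sub>R ?b) + \<xi> *\<^sub>R ?a) - pd i f (t + \<xi> *\<^sub>R ?a))"
    using mvt_line_difference[OF f h(1) U1] by blast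
  have U2: "(t + \<xi> *\<^sub>R ?a) + y *\<^sub>R ?b \<in> U" if "0 \<le> y" "y \<le> h" for y
    using inU[OF _ _ that, of \<xi>] \<xi> by simp
  obtain \<eta> where \<eta>: "0 < \<eta>" "\<eta> < h"
    "pd i f ((t + \<xi> *\<^sub>R ?a) + h *\<^sub>R ?b) - pd i f (t + \<xi> *\<^sub>R ?a)
       = h * pd j (pd i f) ((t + \<xi> *\<^sub>R ?a) + \<eta> *\<^sub>R ?b)"
    using mvt_line[OF smooth_pd[OF f] h(1) U2] by blast
  have D1: "D = h * h * pd j (pd i f) (t + \<xi> *\<^sub>R ?a + \<eta> *\<^sub>R ?b)"
    using \<xi>(3) \<eta>(3) unfolding D_def by (simp add: algebra_simps)
  have U3: "(t + h *\<^sub>R ?a) + y *\<^sub>R ?b \<in> U \<and> t + y *\<^sub>R ?b \<in> U" if "0 \<le> y" "y \<le> h" for y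
    using inU[OF _ _ that, of h] inU[OF _ _ that, of 0] h(1) by (simp add: algebra_simps)
  obtain \<zeta> where \<zeta>: "0 < \<zeta>" "\<zeta> < h"
    "(f ((t + h *\<^sub>R ?a) + h *\<^sub>R ?b) - f (t + h *\<^sub>R ?b)) - (f (t + h *\<^sub>R ?a) - f t)
      = h * (pd j f ((t + h *\<^sub>R ?a) + \<zeta> *\<^sub>R ?b) - pd j f (t + \<zeta> *\<^sub>R ?b))"
    using mvt_line_difference[OF f h(1) U3] by blast
  have U4: "(t + \<zeta> *\<^sub>R ?b) + x *\<^sub>R ?a \<in> U" if "0 \<le> x" "x \<le> h" for x
    using inU[OF that, of \<zeta>] \<zeta> by (simp add: algebra_simps)
  obtain \<omega> where \<omega>: "0 < \<omega>" "\<omega> < h"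
    "pd j f ((t + \<zeta> *\<^sub>R ?b) + h *\<^sub>R ?a) - pd j f (t + \<zeta> *\<^sub>R ?b)
       = h * pd i (pd j f) ((t + \<zeta> *\<^sub>R ?b) + \<omega> *\<^sub>R ?a)"
    using mvt_line[OF smooth_pd[OF f] h(1) U4] by blast
  have D2: "D = h * h * pd i (pd j f) (t + \<omega> *\<^sub>R ?a + \<zeta> *\<^sub>R ?b)"
    using \<zeta>(3) \<omega>(3) unfolding D_def by (simp add: algebra_simps)
  have "pd j (pd i f) (t + \<xi> *\<^sub>R ?a + \<eta> *\<^sub>R ?b) = pd i (pd j f) (t + \<omega> *\<^sub>R ?a + \<zeta> *\<^sub>R ?b)"
    using D1 D2 h by simp
  moreover have "t + \<xi> *\<^sub>R ?a + \<eta> *\<^sub>R ?b \<in> U" "t + \<omega> *\<^sub>R ?a + \<zeta> *\<^sub>R ?b \<in> U"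
    using inU \<xi> \<eta> \<zeta> \<omega> by auto
  moreover have "dist (t + \<xi> *\<^sub>R ?a + \<eta> *\<^sub>R ?b) t \<le> 2 * h"
    "dist (t + \<omega> *\<^sub>R ?a + \<zeta> *\<^sub>R ?b) t \<le> 2 * h"
    using \<xi> \<eta> \<zeta> \<omega> by (auto intro!: square_near_point)
  ultimately show ?thesis by blast
qed

text \<open>Schwarz's theorem: letting h tend to 0, continuity of the second derivatives gives
  equality of the mixed partials.\<close>

lemma schwarz:
  assumes U: "open U" and f: "smooth_on U f" and t: "t \<in> U"
  shows "pd i (pd j f) t = pd j (pd i f) t"
proof (rule ccontr)
  define A where "A = pd j (pd i f)"
  define B where "B = pd i (pd j f)"
  assume "pd i (pd j f) t \<noteq> pd j (pd i f) t"
  then have ne: "A t \<noteq> B t" by (simp add: A_def B_def)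
  define e where "e = \<bar>A t - B t\<bar> / 2"
  have e: "e > 0" using ne by (simp add: e_def)
  obtain r where r: "r > 0" "ball t r \<subseteq> U" using U t open_contains_ball by blast
  obtain d1 where d1: "d1 > 0" "\<forall>x'\<in>U. dist x' t < d1 \<longrightarrow> dist (A x') (A t) < e"
    using smooth_continuous[OF smooth_pd[OF smooth_pd[OF f]]] t e
    unfolding A_def continuous_on_iff by blast
  obtain d2 where d2: "d2 > 0" "\<forall>x'\<in>U. dist x' t < d2 \<longrightarrow> dist (B x') (B t) < e"
    using smooth_continuous[OF smooth_pd[OF smooth_pd[OF f]]] t e
    unfolding B_def continuous_on_iff by blast
  define h where "h = min (min d1 d2) r / 4"
  have h: "h > 0" "2 * h < r" "2 * h < d1" "2 * h < d2" using d1 d2 r by (auto simp: h_def)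
  obtain p q where pq: "dist p t \<le> 2 * h" "dist q t \<le> 2 * h" "p \<in> U" "q \<in> U" "A p = B q"
    using mixed_partials_meet[OF f r(2) h(1,2), of j i] unfolding A_def B_def by blast
  have "dist (A p) (A t) < e" using d1 pq h by auto
  moreover have "dist (B q) (B t) < e" using d2 pq h by auto
  ultimately have "\<bar>A t - B t\<bar> < 2 * e" using pq(5) by (simp add: dist_real_def)
  then show False by (simp add: e_def)
qed

section \<open>The bidifferential operators of the Moyal product\<close>

lemma pd_pds_commute:
  assumes U: "open U" and f: "smooth_on U f" and t: "t \<in> U"
  shows "pd i (pds is f) t = pds is (pd i f) t"
  using t
proof (induction "is" arbitrary: t)
  case Nil then show ?case by simp
next
  case (Cons k ks)
  have "pd i (pds (k # ks) f) t = pd i (pd k (pds ks f)) t" by simp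
  also have "\<dots> = pd k (pd i (pds ks f)) t"
    by (rule schwarz[OF U smooth_pds[OF f] Cons.prems])
  also have "\<dots> = pd k (pds ks (pd i f)) t"
    by (rule pd_local[OF U Cons.prems]) (use Cons.IH in auto)
  finally show ?case by simp
qed

lemma pds_lin:
  assumes U: "open U" and S: "finite S" and F: "\<And>k. k \<in> S \<Longrightarrow> smooth_on U (F k)" and x: "x \<in> U"
  shows "pds is (\<lambda>y. \<Sum>k\<in>S. a k * F k y) x = (\<Sum>k\<in>S. a k * pds is (F k) x)"
  using x
proof (induction "is" arbitrary: x)
  case Nil then show ?case by simp
next
  case (Cons i "is")
  have "pds (i # is) (\<lambda>y. \<Sum>k\<in>S. a k * F k y) x = pd i (pds is (\<lambda>y. \<Sum>k\<in>S. a k * F k y)) x" by simp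
  also have "\<dots> = pd i (\<lambda>y. \<Sum>k\<in>S. a k * pds is (F k) y) x"
    by (rule pd_local[OF U Cons.prems]) (use Cons.IH in auto)
  also have "\<dots> = (\<Sum>k\<in>S. pd i (\<lambda>y. a k * pds is (F k) y) x)"
    by (rule pd_sum[OF S _ Cons.prems]) (rule smooth_cmult[OF U smooth_pds[OF F]])
  also have "\<dots> = (\<Sum>k\<in>S. a k * pd i (pds is (F k)) x)"
    by (rule sum.cong[OF refl]) (rule pd_cmult[OF smooth_pds[OF F] Cons.prems])
  finally show ?case by simp
qed

text \<open>The order-c term of exp(hbar theta d d') f g, i.e.
  sum over multi-indices I, J of length c of theta_{I J} (d_I f)(d_J g).
  The Moyal product is the hbar-graded sum of these terms weighted by 1/c!.\<close>

definition bidiff :: "('n::finite \<Rightarrow> 'n \<Rightarrow> real) \<Rightarrow> nat \<Rightarrow> (real^'n \<Rightarrow> real) \<Rightarrow>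
    (real^'n \<Rightarrow> real) \<Rightarrow> real^'n \<Rightarrow> real" where
  "bidiff \<theta> c f g t = (\<Sum>is\<in>{xs. length xs = c}. \<Sum>js\<in>{xs. length xs = c}.
         (\<Prod>k<c. \<theta> (is ! k) (js ! k)) * pds is f t * pds js g t)"

lemma mstar_bidiff: "mstar \<theta> F G p t
    = (\<Sum>c\<le>p. \<Sum>a\<le>p - c. (1 / fact c) * bidiff \<theta> c (F a) (G (p - c - a)) t)"
  unfolding mstar_def bidiff_def by simp

lemma finite_lists_length: "finite {xs :: ('n::finite) list. length xs = c}"
  using finite_lists_length_eq[of "UNIV :: 'n set" c] by simp

lemma sum_lists_Suc:
  "(\<Sum>xs\<in>{xs :: ('n::finite) list. length xs = Suc c}. F xs)
      = (\<Sum>i\<in>UNIV. \<Sum>xs\<in>{xs. length xs = c}. F (i # xs))"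
proof -
  have e: "{xs :: 'n list. length xs = Suc c} = (\<lambda>(i,xs). i # xs) ` (UNIV \<times> {xs. length xs = c})"
    by (auto simp: length_Suc_conv image_def)
  have inj: "inj_on (\<lambda>(i,xs). i # xs) (UNIV \<times> {xs :: 'n list. length xs = c})"
    by (auto simp: inj_on_def)
  show ?thesis unfolding e sum.reindex[OF inj] o_def
    by (simp add: sum.cartesian_product split_def)
qed

lemma bidiff_0: "bidiff \<theta> 0 f g t = f t * g t"
proof -
  have "{xs :: 'a list. length xs = 0} = {[]}" by auto
  then show ?thesis unfolding bidiff_def by simp
qed

lemma bidiff_local:
  assumes "open U" "\<forall>x\<in>U. f x = f' x" "\<forall>x\<in>U. g x = g' x" "t \<in> U"
  shows "bidiff \<theta> c f g t = bidiff \<theta> c f' g' t"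
  unfolding bidiff_def using pds_local[OF assms(1,2,4)] pds_local[OF assms(1,3,4)] by simp

lemma bidiff_smooth:
  assumes U: "open U" and f: "smooth_on U f" and g: "smooth_on U g"
  shows "smooth_on U (bidiff \<theta> c f g)"
proof -
  have "smooth_on U (\<lambda>t. \<Sum>is\<in>{xs. length xs = c}. \<Sum>js\<in>{xs. length xs = c}.
         (\<Prod>k<c. \<theta> (is ! k) (js ! k)) * pds is f t * pds js g t)"
    by (intro smooth_sum[OF U] smooth_mult[OF U] smooth_cmult[OF U] smooth_pds f g)
  then show ?thesis unfolding bidiff_def[abs_def] by simp
qed

lemma bidiff_lincomb_left:
  assumes U: "open U" and S: "finite S" and F: "\<And>k. k \<in> S \<Longrightarrow> smooth_on U (F k)"
    and t: "t \<in> U"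
  shows "bidiff \<theta> c (\<lambda>x. \<Sum>k\<in>S. a k * F k x) g t = (\<Sum>k\<in>S. a k * bidiff \<theta> c (F k) g t)"
  unfolding bidiff_def
  by (simp add: pds_lin[OF U S F t] sum_distrib_left sum_distrib_right sum.swap[of _ S] algebra_simps)

lemma bidiff_lincomb_right:
  assumes U: "open U" and S: "finite S" and F: "\<And>k. k \<in> S \<Longrightarrow> smooth_on U (F k)"
    and t: "t \<in> U"
  shows "bidiff \<theta> c g (\<lambda>x. \<Sum>k\<in>S. a k * F k x) t = (\<Sum>k\<in>S. a k * bidiff \<theta> c g (F k) t)"
  unfolding bidiff_def
  by (simp add: pds_lin[OF U S F t] sum_distrib_left sum_distrib_right sum.swap[of _ S] algebra_simps)

lemma bidiff_Suc:
  assumes U: "open U" and f: "smooth_on U f" and g: "smooth_on U g" and t: "t \<in> U"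
  shows "bidiff \<theta> (Suc c) f g t = (\<Sum>i\<in>UNIV. \<Sum>j\<in>UNIV. \<theta> i j * bidiff \<theta> c (pd i f) (pd j g) t)"
proof -
  have "bidiff \<theta> (Suc c) f g t = (\<Sum>i\<in>UNIV. \<Sum>is\<in>{xs. length xs = c}. \<Sum>j\<in>UNIV. \<Sum>js\<in>{xs. length xs = c}.
     \<theta> i j * ((\<Prod>k<c. \<theta> (is ! k) (js ! k)) * pds is (pd i f) t * pds js (pd j g) t))"
    unfolding bidiff_def sum_lists_Suc
    by (simp del: prod.lessThan_Suc add: prod.lessThan_Suc_shift pd_pds_commute[OF U f t] pd_pds_commute[OF U g t] algebra_simps)
  also have "\<dots> = (\<Sum>i\<in>UNIV. \<Sum>j\<in>UNIV. \<Sum>is\<in>{xs. length xs = c}. \<Sum>js\<in>{xs. length xs = c}.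
     \<theta> i j * ((\<Prod>k<c. \<theta> (is ! k) (js ! k)) * pds is (pd i f) t * pds js (pd j g) t))"
    by (rule sum.cong[OF refl], rule sum.swap)
  also have "\<dots> = (\<Sum>i\<in>UNIV. \<Sum>j\<in>UNIV. \<theta> i j * bidiff \<theta> c (pd i f) (pd j g) t)"
    unfolding bidiff_def by (simp add: sum_distrib_left)
  finally show ?thesis .
qed

text \<open>Leibniz rule d_k B_c(f,g) = B_c(d_k f, g) + B_c(f, d_k g) (this uses Schwarz's theorem),
  and linearity of B_c over double sums and sums of two terms.\<close>

lemma pd_bidiff:
  assumes U: "open U" and f: "smooth_on U f" and g: "smooth_on U g" and t: "t \<in> U"
  shows "pd k (bidiff \<theta> c f g) t = bidiff \<theta> c (pd k f) g t + bidiff \<theta> c f (pd k g) t"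
proof -
  let ?A = "{xs :: 'a list. length xs = c}"
  let ?coeff = "\<lambda>is js. \<Prod>k<c. \<theta> (is ! k) (js ! k)"
  have e: "bidiff \<theta> c f g = (\<lambda>t. \<Sum>is\<in>?A. \<Sum>js\<in>?A. ?coeff is js * pds is f t * pds js g t)"
    unfolding bidiff_def[abs_def] by simp
  have "pd k (bidiff \<theta> c f g) t
      = (\<Sum>is\<in>?A. pd k (\<lambda>t. \<Sum>js\<in>?A. ?coeff is js * pds is f t * pds js g t) t)"
    unfolding e
    by (rule pd_sum[OF finite_lists_length _ t])
      (intro smooth_sum[OF U] smooth_mult[OF U] smooth_cmult[OF U] smooth_pds f g)
  also have "\<dots> = (\<Sum>is\<in>?A. \<Sum>js\<in>?A. pd k (\<lambda>t. ?coeff is js * pds is f t * pds js g t) t)"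
    by (rule sum.cong[OF refl], rule pd_sum[OF finite_lists_length _ t])
      (intro smooth_sum[OF U] smooth_mult[OF U] smooth_cmult[OF U] smooth_pds f g)
  also have "\<dots> = (\<Sum>is\<in>?A. \<Sum>js\<in>?A. ?coeff is js * (pd k (pds is f) t * pds js g t + pds is f t * pd k (pds js g) t))"
    by (intro sum.cong refl pd_scaled_product[OF U smooth_pds[OF f] smooth_pds[OF g] t])
  also have "\<dots> = bidiff \<theta> c (pd k f) g t + bidiff \<theta> c f (pd k g) t"
    unfolding bidiff_def pd_pds_commute[OF U f t] pd_pds_commute[OF U g t]
    by (simp add: sum.distrib algebra_simps)
  finally show ?thesis .
qed

lemma bidiff_lincomb2_left:
  fixes F :: "'n::finite \<Rightarrow> 'n \<Rightarrow> real^'n \<Rightarrow> real"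
  assumes U: "open U" and F: "\<And>i j. smooth_on U (F i j)" and t: "t \<in> U"
  shows "bidiff \<theta> c (\<lambda>x. \<Sum>i\<in>UNIV. \<Sum>j\<in>UNIV. a i j * F i j x) g t
      = (\<Sum>i\<in>UNIV. \<Sum>j\<in>UNIV. a i j * bidiff \<theta> c (F i j) g t)"
proof -
  have e: "\<And>G :: _ \<Rightarrow> _ \<Rightarrow> real. (\<Sum>i\<in>UNIV. \<Sum>j\<in>UNIV. G i j) = (\<Sum>p\<in>UNIV. G (fst p) (snd p))"
    by (simp add: sum.cartesian_product split_def)
  show ?thesis unfolding e
    by (rule bidiff_lincomb_left[OF U, where F="\<lambda>p. F (fst p) (snd p)", OF _ _ t]) (use F in auto)
qed

lemma bidiff_lincomb2_right:
  fixes F :: "'n::finite \<Rightarrow> 'n \<Rightarrow> real^'n \<Rightarrow> real"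
  assumes U: "open U" and F: "\<And>i j. smooth_on U (F i j)" and t: "t \<in> U"
  shows "bidiff \<theta> c g (\<lambda>x. \<Sum>i\<in>UNIV. \<Sum>j\<in>UNIV. a i j * F i j x) t
      = (\<Sum>i\<in>UNIV. \<Sum>j\<in>UNIV. a i j * bidiff \<theta> c g (F i j) t)"
proof -
  have e: "\<And>G :: _ \<Rightarrow> _ \<Rightarrow> real. (\<Sum>i\<in>UNIV. \<Sum>j\<in>UNIV. G i j) = (\<Sum>p\<in>UNIV. G (fst p) (snd p))"
    by (simp add: sum.cartesian_product split_def)
  show ?thesis unfolding e
    by (rule bidiff_lincomb_right[OF U, where F="\<lambda>p. F (fst p) (snd p)", OF _ _ t]) (use F in auto)
qed

lemma bidiff_add_left:
  assumes U: "open U" and f: "smooth_on U f" and f': "smooth_on U f'" and t: "t \<in> U"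
  shows "bidiff \<theta> c (\<lambda>x. f x + f' x) g t = bidiff \<theta> c f g t + bidiff \<theta> c f' g t"
  using bidiff_lincomb_left[OF U, where S="{True,False}" and F="\<lambda>b. if b then f else f'" and a="\<lambda>_. 1", OF _ _ t] f f'
  by simp

lemma bidiff_add_right:
  assumes U: "open U" and f: "smooth_on U f" and f': "smooth_on U f'" and t: "t \<in> U"
  shows "bidiff \<theta> c g (\<lambda>x. f x + f' x) t = bidiff \<theta> c g f t + bidiff \<theta> c g f' t"
  using bidiff_lincomb_right[OF U, where S="{True,False}" and F="\<lambda>b. if b then f else f'" and a="\<lambda>_. 1", OF _ _ t] f f'
  by simp

lemma bidiff_const_left: "bidiff \<theta> c (\<lambda>x. k) g t = (if c = 0 then k * g t else 0)"
proof (cases c)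
  case 0 then show ?thesis by (simp add: bidiff_0)
next
  case (Suc n)
  then have "\<forall>is\<in>{xs. length xs = c}. is \<noteq> []" by auto
  then show ?thesis unfolding bidiff_def pds_const using Suc by (auto intro!: sum.neutral)
qed

lemma bidiff_const_right: "bidiff \<theta> c g (\<lambda>x. k) t = (if c = 0 then g t * k else 0)"
proof (cases c)
  case 0 then show ?thesis by (simp add: bidiff_0)
next
  case (Suc n)
  then have "\<forall>is\<in>{xs. length xs = c}. is \<noteq> []" by auto
  then show ?thesis unfolding bidiff_def pds_const using Suc by (auto intro!: sum.neutral)
qed

section \<open>Associativity of the Moyal product\<close>

text \<open>Applying the order-(c+1) operator inside, or the order-(M+1) operator outside, a nested
  bidifferential expression splits off one theta-contraction; outside, the derivative
  falls on the inner expression by the Leibniz rule.\<close>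

lemma bidiff_inner_Suc_left:
  assumes U: "open U" and f: "smooth_on U f" and g: "smooth_on U g" and h: "smooth_on U h"
    and t: "t \<in> U"
  shows "bidiff \<theta> M (bidiff \<theta> (Suc c) f g) h t
      = (\<Sum>i\<in>UNIV. \<Sum>j\<in>UNIV. \<theta> i j * bidiff \<theta> M (bidiff \<theta> c (pd i f) (pd j g)) h t)"
proof -
  have "bidiff \<theta> M (bidiff \<theta> (Suc c) f g) h t
      = bidiff \<theta> M (\<lambda>x. \<Sum>i\<in>UNIV. \<Sum>j\<in>UNIV. \<theta> i j * bidiff \<theta> c (pd i f) (pd j g) x) h t"
    by (rule bidiff_local[OF U _ _ t]) (auto simp: bidiff_Suc[OF U f g])
  also have "\<dots> = (\<Sum>i\<in>UNIV. \<Sum>j\<in>UNIV. \<theta> i j * bidiff \<theta> M (bidiff \<theta> c (pd i f) (pd j g)) h t)"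
    by (rule bidiff_lincomb2_left[OF U _ t]) (intro bidiff_smooth[OF U] smooth_pd f g)
  finally show ?thesis .
qed

lemma bidiff_inner_Suc_right:
  assumes U: "open U" and f: "smooth_on U f" and g: "smooth_on U g" and h: "smooth_on U h"
    and t: "t \<in> U"
  shows "bidiff \<theta> M f (bidiff \<theta> (Suc c) g h) t
      = (\<Sum>i\<in>UNIV. \<Sum>j\<in>UNIV. \<theta> i j * bidiff \<theta> M f (bidiff \<theta> c (pd i g) (pd j h)) t)"
proof -
  have "bidiff \<theta> M f (bidiff \<theta> (Suc c) g h) t
      = bidiff \<theta> M f (\<lambda>x. \<Sum>i\<in>UNIV. \<Sum>j\<in>UNIV. \<theta> i j * bidiff \<theta> c (pd i g) (pd j h) x) t"
    by (rule bidiff_local[OF U _ _ t]) (auto simp: bidiff_Suc[OF U g h])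
  also have "\<dots> = (\<Sum>i\<in>UNIV. \<Sum>j\<in>UNIV. \<theta> i j * bidiff \<theta> M f (bidiff \<theta> c (pd i g) (pd j h)) t)"
    by (rule bidiff_lincomb2_right[OF U _ t]) (intro bidiff_smooth[OF U] smooth_pd g h)
  finally show ?thesis .
qed

lemma bidiff_outer_Suc_left:
  assumes U: "open U" and f: "smooth_on U f" and g: "smooth_on U g" and h: "smooth_on U h"
    and t: "t \<in> U"
  shows "bidiff \<theta> (Suc M) (bidiff \<theta> c f g) h t = (\<Sum>i\<in>UNIV. \<Sum>j\<in>UNIV. \<theta> i j *
      (bidiff \<theta> M (bidiff \<theta> c (pd i f) g) (pd j h) t + bidiff \<theta> M (bidiff \<theta> c f (pd i g)) (pd j h) t))"
proof -
  have "bidiff \<theta> (Suc M) (bidiff \<theta> c f g) h t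
      = (\<Sum>i\<in>UNIV. \<Sum>j\<in>UNIV. \<theta> i j * bidiff \<theta> M (pd i (bidiff \<theta> c f g)) (pd j h) t)"
    by (rule bidiff_Suc[OF U bidiff_smooth[OF U f g] h t])
  also have "\<dots> = (\<Sum>i\<in>UNIV. \<Sum>j\<in>UNIV. \<theta> i j * bidiff \<theta> M (\<lambda>x. bidiff \<theta> c (pd i f) g x + bidiff \<theta> c f (pd i g) x) (pd j h) t)"
    by (intro sum.cong refl arg_cong2[where f="(*)"] bidiff_local[OF U _ _ t])
      (auto simp: pd_bidiff[OF U f g])
  also have "\<dots> = (\<Sum>i\<in>UNIV. \<Sum>j\<in>UNIV. \<theta> i j *
      (bidiff \<theta> M (bidiff \<theta> c (pd i f) g) (pd j h) t + bidiff \<theta> M (bidiff \<theta> c f (pd i g)) (pd j h) t))"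
    by (intro sum.cong refl arg_cong2[where f="(*)"] bidiff_add_left[OF U _ _ t] bidiff_smooth[OF U] smooth_pd f g)
  finally show ?thesis .
qed

lemma bidiff_outer_Suc_right:
  assumes U: "open U" and f: "smooth_on U f" and g: "smooth_on U g" and h: "smooth_on U h"
    and t: "t \<in> U"
  shows "bidiff \<theta> (Suc M) f (bidiff \<theta> c g h) t = (\<Sum>i\<in>UNIV. \<Sum>j\<in>UNIV. \<theta> i j *
      (bidiff \<theta> M (pd i f) (bidiff \<theta> c (pd j g) h) t + bidiff \<theta> M (pd i f) (bidiff \<theta> c g (pd j h)) t))"
proof -
  have "bidiff \<theta> (Suc M) f (bidiff \<theta> c g h) t
      = (\<Sum>i\<in>UNIV. \<Sum>j\<in>UNIV. \<theta> i j * bidiff \<theta> M (pd i f) (pd j (bidiff \<theta> c g h)) t)"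
    by (rule bidiff_Suc[OF U f bidiff_smooth[OF U g h] t])
  also have "\<dots> = (\<Sum>i\<in>UNIV. \<Sum>j\<in>UNIV. \<theta> i j * bidiff \<theta> M (pd i f) (\<lambda>x. bidiff \<theta> c (pd j g) h x + bidiff \<theta> c g (pd j h) x) t)"
    by (intro sum.cong refl arg_cong2[where f="(*)"] bidiff_local[OF U _ _ t])
      (auto simp: pd_bidiff[OF U g h])
  also have "\<dots> = (\<Sum>i\<in>UNIV. \<Sum>j\<in>UNIV. \<theta> i j *
      (bidiff \<theta> M (pd i f) (bidiff \<theta> c (pd j g) h) t + bidiff \<theta> M (pd i f) (bidiff \<theta> c g (pd j h)) t))"
    by (intro sum.cong refl arg_cong2[where f="(*)"] bidiff_add_right[OF U _ _ t] bidiff_smooth[OF U] smooth_pd g h)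
  finally show ?thesis .
qed

text \<open>Grouping the terms of ((f * g) * h) and (f * (g * h)) by total order N, one gets the
  weighted sums below, with the weights 1/(c! (N-c)!) of the binomial expansion.\<close>

definition binom_weight :: "nat \<Rightarrow> nat \<Rightarrow> real" where
  "binom_weight c M = 1 / (fact c * fact (M - c))"

definition assoc_left :: "('n::finite \<Rightarrow> 'n \<Rightarrow> real) \<Rightarrow> nat \<Rightarrow> (real^'n \<Rightarrow> real) \<Rightarrow>
    (real^'n \<Rightarrow> real) \<Rightarrow> (real^'n \<Rightarrow> real) \<Rightarrow> real^'n \<Rightarrow> real" where
  "assoc_left \<theta> N f g h t = (\<Sum>c\<le>N. binom_weight c N * bidiff \<theta> (N - c) (bidiff \<theta> c f g) h t)"

definition assoc_right :: "('n::finite \<Rightarrow> 'n \<Rightarrow> real) \<Rightarrow> nat \<Rightarrow> (real^'n \<Rightarrow> real) \<Rightarrow>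
    (real^'n \<Rightarrow> real) \<Rightarrow> (real^'n \<Rightarrow> real) \<Rightarrow> real^'n \<Rightarrow> real" where
  "assoc_right \<theta> N f g h t = (\<Sum>c\<le>N. binom_weight c N * bidiff \<theta> (N - c) f (bidiff \<theta> c g h) t)"

lemma binom_weight_recursion:
  "real (Suc N) * (\<Sum>c\<le>Suc N. binom_weight c (Suc N) * X c (Suc N - c)) =
     (\<Sum>c\<le>N. binom_weight c N * X (Suc c) (N - c)) + (\<Sum>c\<le>N. binom_weight c N * X c (Suc (N - c)))"
proof -
  have "real (Suc N) * (\<Sum>c\<le>Suc N. binom_weight c (Suc N) * X c (Suc N - c)) =
      (\<Sum>c\<le>Suc N. real c * binom_weight c (Suc N) * X c (Suc N - c) + real (Suc N - c) * binom_weight c (Suc N) * X c (Suc N - c))"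
    unfolding sum_distrib_left
  proof (intro sum.cong refl)
    fix c assume "c \<in> {..Suc N}"
    then have "real (Suc N) = real c + real (Suc N - c)" by (simp add: of_nat_diff)
    then show "real (Suc N) * (binom_weight c (Suc N) * X c (Suc N - c)) =
       real c * binom_weight c (Suc N) * X c (Suc N - c) + real (Suc N - c) * binom_weight c (Suc N) * X c (Suc N - c)"
      by (simp only: distrib_right mult.assoc)
  qed
  also have "\<dots> = (\<Sum>c\<le>Suc N. real c * binom_weight c (Suc N) * X c (Suc N - c)) + (\<Sum>c\<le>Suc N. real (Suc N - c) * binom_weight c (Suc N) * X c (Suc N - c))"
    by (rule sum.distrib)
  also have "(\<Sum>c\<le>Suc N. real c * binom_weight c (Suc N) * X c (Suc N - c))
      = (\<Sum>c\<le>N. binom_weight c N * X (Suc c) (N - c))"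
  proof -
    have "(\<Sum>c\<le>Suc N. real c * binom_weight c (Suc N) * X c (Suc N - c))
        = (\<Sum>c\<le>N. real (Suc c) * binom_weight (Suc c) (Suc N) * X (Suc c) (N - c))"
      by (subst sum.atMost_Suc_shift) simp
    also have "\<dots> = (\<Sum>c\<le>N. binom_weight c N * X (Suc c) (N - c))"
      by (intro sum.cong refl) (simp add: binom_weight_def del: of_nat_Suc)
    finally show ?thesis .
  qed
  also have "(\<Sum>c\<le>Suc N. real (Suc N - c) * binom_weight c (Suc N) * X c (Suc N - c))
      = (\<Sum>c\<le>N. binom_weight c N * X c (Suc (N - c)))"
  proof -
    have "(\<Sum>c\<le>Suc N. real (Suc N - c) * binom_weight c (Suc N) * X c (Suc N - c))
        = (\<Sum>c\<le>N. real (Suc N - c) * binom_weight c (Suc N) * X c (Suc N - c))"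
      by (subst sum.atMost_Suc) simp
    also have "\<dots> = (\<Sum>c\<le>N. binom_weight c N * X c (Suc (N - c)))"
      by (intro sum.cong refl) (simp add: binom_weight_def Suc_diff_le del: of_nat_Suc)
    finally show ?thesis .
  qed
  finally show ?thesis .
qed

lemma sum_swap3: "(\<Sum>c\<in>C. \<Sum>i\<in>I. \<Sum>j\<in>J. G c i j) = (\<Sum>i\<in>I. \<Sum>j\<in>J. \<Sum>c\<in>C. G c i j)"
proof -
  have "(\<Sum>c\<in>C. \<Sum>i\<in>I. \<Sum>j\<in>J. G c i j) = (\<Sum>i\<in>I. \<Sum>c\<in>C. \<Sum>j\<in>J. G c i j)"
    by (rule sum.swap)
  also have "\<dots> = (\<Sum>i\<in>I. \<Sum>j\<in>J. \<Sum>c\<in>C. G c i j)"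
    by (rule sum.cong[OF refl], rule sum.swap)
  finally show ?thesis .
qed

lemma regroup_left: "(\<Sum>c\<in>C. w c * (a * x c)) + (\<Sum>c\<in>C. w c * (a * (y c + z c))) =
   (a::real) * ((\<Sum>c\<in>C. w c * x c) + (\<Sum>c\<in>C. w c * y c) + (\<Sum>c\<in>C. w c * z c))"
  by (simp add: sum_distrib_left distrib_left sum.distrib mult.left_commute)

lemma regroup_right: "(\<Sum>c\<in>C. w c * (a * x c)) + (\<Sum>c\<in>C. w c * (a * (y c + z c))) =
   (a::real) * ((\<Sum>c\<in>C. w c * y c) + (\<Sum>c\<in>C. w c * z c) + (\<Sum>c\<in>C. w c * x c))"
  by (simp add: sum_distrib_left distrib_left sum.distrib mult.left_commute)

text \<open>Both weighted sums satisfy the same recursion, in which theta_ij d_i, d_j is distributed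
  over the three arguments in all three possible pairs.\<close>

lemma assoc_left_recursion:
  assumes U: "open U" and f: "smooth_on U f" and g: "smooth_on U g" and h: "smooth_on U h"
    and t: "t \<in> U"
  shows "real (Suc N) * assoc_left \<theta> (Suc N) f g h t = (\<Sum>i\<in>UNIV. \<Sum>j\<in>UNIV. \<theta> i j *
     (assoc_left \<theta> N (pd i f) (pd j g) h t + assoc_left \<theta> N (pd i f) g (pd j h) t
      + assoc_left \<theta> N f (pd i g) (pd j h) t))"
proof -
  have "real (Suc N) * assoc_left \<theta> (Suc N) f g h t =
     (\<Sum>c\<le>N. binom_weight c N * bidiff \<theta> (N - c) (bidiff \<theta> (Suc c) f g) h t)
     + (\<Sum>c\<le>N. binom_weight c N * bidiff \<theta> (Suc (N - c)) (bidiff \<theta> c f g) h t)"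
    unfolding assoc_left_def
    by (rule binom_weight_recursion[where X="\<lambda>c M. bidiff \<theta> M (bidiff \<theta> c f g) h t"])
  also have "\<dots> = (\<Sum>c\<le>N. \<Sum>i\<in>UNIV. \<Sum>j\<in>UNIV. binom_weight c N *
        (\<theta> i j * bidiff \<theta> (N - c) (bidiff \<theta> c (pd i f) (pd j g)) h t))
     + (\<Sum>c\<le>N. \<Sum>i\<in>UNIV. \<Sum>j\<in>UNIV. binom_weight c N * (\<theta> i j *
        (bidiff \<theta> (N - c) (bidiff \<theta> c (pd i f) g) (pd j h) t
         + bidiff \<theta> (N - c) (bidiff \<theta> c f (pd i g)) (pd j h) t)))"
    by (simp only: sum_distrib_left bidiff_inner_Suc_left[OF U f g h t, where \<theta>=\<theta> and M="N - c" for c]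
        bidiff_outer_Suc_left[OF U f g h t, where \<theta>=\<theta> and M="N - c" for c])
  also have "\<dots> = (\<Sum>i\<in>UNIV. \<Sum>j\<in>UNIV.
        (\<Sum>c\<le>N. binom_weight c N * (\<theta> i j * bidiff \<theta> (N - c) (bidiff \<theta> c (pd i f) (pd j g)) h t))
      + (\<Sum>c\<le>N. binom_weight c N * (\<theta> i j * (bidiff \<theta> (N - c) (bidiff \<theta> c (pd i f) g) (pd j h) t
          + bidiff \<theta> (N - c) (bidiff \<theta> c f (pd i g)) (pd j h) t))))"
    by (simp only: sum_swap3[where C="{..N}"] sum.distrib)
  also have "\<dots> = (\<Sum>i\<in>UNIV. \<Sum>j\<in>UNIV. \<theta> i j *
     (assoc_left \<theta> N (pd i f) (pd j g) h t + assoc_left \<theta> N (pd i f) g (pd j h) t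
      + assoc_left \<theta> N f (pd i g) (pd j h) t))"
    unfolding assoc_left_def by (rule sum.cong[OF refl], rule sum.cong[OF refl], rule regroup_left)
  finally show ?thesis .
qed

lemma assoc_right_recursion:
  assumes U: "open U" and f: "smooth_on U f" and g: "smooth_on U g" and h: "smooth_on U h"
    and t: "t \<in> U"
  shows "real (Suc N) * assoc_right \<theta> (Suc N) f g h t = (\<Sum>i\<in>UNIV. \<Sum>j\<in>UNIV. \<theta> i j *
     (assoc_right \<theta> N (pd i f) (pd j g) h t + assoc_right \<theta> N (pd i f) g (pd j h) t
      + assoc_right \<theta> N f (pd i g) (pd j h) t))"
proof -
  have "real (Suc N) * assoc_right \<theta> (Suc N) f g h t =
     (\<Sum>c\<le>N. binom_weight c N * bidiff \<theta> (N - c) f (bidiff \<theta> (Suc c) g h) t)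
     + (\<Sum>c\<le>N. binom_weight c N * bidiff \<theta> (Suc (N - c)) f (bidiff \<theta> c g h) t)"
    unfolding assoc_right_def
    by (rule binom_weight_recursion[where X="\<lambda>c M. bidiff \<theta> M f (bidiff \<theta> c g h) t"])
  also have "\<dots> = (\<Sum>c\<le>N. \<Sum>i\<in>UNIV. \<Sum>j\<in>UNIV. binom_weight c N *
        (\<theta> i j * bidiff \<theta> (N - c) f (bidiff \<theta> c (pd i g) (pd j h)) t))
     + (\<Sum>c\<le>N. \<Sum>i\<in>UNIV. \<Sum>j\<in>UNIV. binom_weight c N * (\<theta> i j *
        (bidiff \<theta> (N - c) (pd i f) (bidiff \<theta> c (pd j g) h) t
         + bidiff \<theta> (N - c) (pd i f) (bidiff \<theta> c g (pd j h)) t)))"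
    by (simp only: sum_distrib_left bidiff_inner_Suc_right[OF U f g h t, where \<theta>=\<theta> and M="N - c" for c]
        bidiff_outer_Suc_right[OF U f g h t, where \<theta>=\<theta> and M="N - c" for c])
  also have "\<dots> = (\<Sum>i\<in>UNIV. \<Sum>j\<in>UNIV.
        (\<Sum>c\<le>N. binom_weight c N * (\<theta> i j * bidiff \<theta> (N - c) f (bidiff \<theta> c (pd i g) (pd j h)) t))
      + (\<Sum>c\<le>N. binom_weight c N * (\<theta> i j * (bidiff \<theta> (N - c) (pd i f) (bidiff \<theta> c (pd j g) h) t
          + bidiff \<theta> (N - c) (pd i f) (bidiff \<theta> c g (pd j h)) t))))"
    by (simp only: sum_swap3[where C="{..N}"] sum.distrib)
  also have "\<dots> = (\<Sum>i\<in>UNIV. \<Sum>j\<in>UNIV. \<theta> i j *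
     (assoc_right \<theta> N (pd i f) (pd j g) h t + assoc_right \<theta> N (pd i f) g (pd j h) t
      + assoc_right \<theta> N f (pd i g) (pd j h) t))"
    unfolding assoc_right_def by (rule sum.cong[OF refl], rule sum.cong[OF refl], rule regroup_right)
  finally show ?thesis .
qed

lemma assoc_left_eq_right:
  assumes U: "open U" and f: "smooth_on U f" and g: "smooth_on U g" and h: "smooth_on U h"
    and t: "t \<in> U"
  shows "assoc_left \<theta> N f g h t = assoc_right \<theta> N f g h t"
  using f g h t
proof (induction N arbitrary: f g h t)
  case 0
  then show ?case by (simp add: assoc_left_def assoc_right_def bidiff_0 binom_weight_def)
next
  case (Suc N)
  have "real (Suc N) * assoc_left \<theta> (Suc N) f g h t = real (Suc N) * assoc_right \<theta> (Suc N) f g h t"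
    unfolding assoc_left_recursion[OF U Suc.prems] assoc_right_recursion[OF U Suc.prems]
    using Suc.IH[OF smooth_pd smooth_pd, OF Suc.prems(1,2,3,4)] Suc.IH[OF smooth_pd _ smooth_pd, OF Suc.prems(1,2,3,4)]
      Suc.IH[OF _ smooth_pd smooth_pd, OF Suc.prems(1,2,3,4)] by simp
  then show ?case by simp
qed

definition triples :: "nat \<Rightarrow> (nat \<times> nat \<times> nat) set" where
  "triples p = {(c,a,b). c + a + b = p}"

definition quadruples :: "nat \<Rightarrow> (nat \<times> nat \<times> nat \<times> nat) set" where
  "quadruples p = {(c,a,b,r). c + a + b + r = p}"

lemma finite_triples: "finite (triples p)"
  by (rule finite_subset[of _ "{..p} \<times> {..p} \<times> {..p}"]) (auto simp: triples_def)

lemma finite_quadruples: "finite (quadruples p)"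
  by (rule finite_subset[of _ "{..p} \<times> {..p} \<times> {..p} \<times> {..p}"]) (auto simp: quadruples_def)

lemma sum_triples: "(\<Sum>c\<le>p. \<Sum>a\<le>p - c. \<phi> c a (p - c - a)) = (\<Sum>(c,a,b)\<in>triples p. \<phi> c a b)"
proof -
  have "(\<Sum>c\<le>p. \<Sum>a\<le>p - c. \<phi> c a (p - c - a))
      = (\<Sum>(c,a)\<in>Sigma {..p} (\<lambda>c. {..p - c}). \<phi> c a (p - c - a))"
    by (rule sum.Sigma) auto
  also have "\<dots> = (\<Sum>(c,a,b)\<in>triples p. \<phi> c a b)"
    by (rule sum.reindex_bij_witness[where i="\<lambda>(c,a,b). (c,a)" and j="\<lambda>(c,a). (c,a,p - c - a)"])
      (auto simp: triples_def)
  finally show ?thesis .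
qed

lemma mstar_triples: "mstar \<theta> F G p t
    = (\<Sum>(c,a,b)\<in>triples p. (1 / fact c) * bidiff \<theta> c (F a) (G b) t)"
  unfolding mstar_bidiff by (rule sum_triples[where \<phi>="\<lambda>c a b. (1 / fact c) * bidiff \<theta> c (F a) (G b) t"])

lemma mstar_triples_fun: "mstar \<theta> F G p
    = (\<lambda>t. \<Sum>(c,a,b)\<in>triples p. (1 / fact c) * bidiff \<theta> c (F a) (G b) t)"
  by (rule ext) (rule mstar_triples)

lemma moyal_mstar:
  assumes U: "open U" and F: "moyal_elem U F" and G: "moyal_elem U G"
  shows "moyal_elem U (mstar \<theta> F G)"
  unfolding moyal_elem_def
proof
  fix p
  show "smooth_on U (mstar \<theta> F G p)"
    unfolding mstar_triples_fun split_def
    by (intro smooth_sum[OF U] smooth_cmult[OF U] bidiff_smooth[OF U])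
      (use F G in \<open>auto simp: moyal_elem_def\<close>)
qed

lemma mstar_assoc_expand_left:
  assumes U: "open U" and F: "moyal_elem U F" and G: "moyal_elem U G" and H: "moyal_elem U H"
    and t: "t \<in> U"
  shows "mstar \<theta> (mstar \<theta> F G) H p t =
    (\<Sum>(N,a,b,r)\<in>quadruples p. assoc_left \<theta> N (F a) (G b) (H r) t)"
proof -
  have sF: "smooth_on U (F a)" "smooth_on U (G a)" "smooth_on U (H a)" for a
    using F G H by (auto simp: moyal_elem_def)
  have "mstar \<theta> (mstar \<theta> F G) H p t =
      (\<Sum>(c2,q,r)\<in>triples p. (1 / fact c2) * bidiff \<theta> c2 (mstar \<theta> F G q) (H r) t)"
    by (rule mstar_triples)
  also have "\<dots> = (\<Sum>(c2,q,r)\<in>triples p. \<Sum>(c1,a,b)\<in>triples q.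
      (1 / fact c2) * ((1 / fact c1) * bidiff \<theta> c2 (bidiff \<theta> c1 (F a) (G b)) (H r) t))"
  proof (rule sum.cong[OF refl], clarify)
    fix c2 q r
    have "bidiff \<theta> c2 (mstar \<theta> F G q) (H r) t = bidiff \<theta> c2 (\<lambda>x. \<Sum>y\<in>triples q.
        (1 / fact (fst y)) * bidiff \<theta> (fst y) (F (fst (snd y))) (G (snd (snd y))) x) (H r) t"
      unfolding mstar_triples_fun by (simp add: split_def)
    also have "\<dots> = (\<Sum>y\<in>triples q. (1 / fact (fst y)) *
        bidiff \<theta> c2 (bidiff \<theta> (fst y) (F (fst (snd y))) (G (snd (snd y)))) (H r) t)"
      by (rule bidiff_lincomb_left[OF U finite_triples _ t]) (intro bidiff_smooth[OF U] sF)
    finally show "(1 / fact c2) * bidiff \<theta> c2 (mstar \<theta> F G q) (H r) t = (\<Sum>(c1,a,b)\<in>triples q.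
        (1 / fact c2) * ((1 / fact c1) * bidiff \<theta> c2 (bidiff \<theta> c1 (F a) (G b)) (H r) t))"
      by (simp add: split_def sum_distrib_left)
  qed
  also have "\<dots> = (\<Sum>x\<in>Sigma (triples p) (\<lambda>(c2,q,r). triples q). (case x of ((c2,q,r),(c1,a,b)) \<Rightarrow>
      (1 / fact c2) * ((1 / fact c1) * bidiff \<theta> c2 (bidiff \<theta> c1 (F a) (G b)) (H r) t)))"
    by (subst sum.Sigma[symmetric]) (auto simp: finite_triples split_def)
  also have "\<dots> = (\<Sum>y\<in>Sigma (quadruples p) (\<lambda>(N,a,b,r). {..N}). (case y of ((N,a,b,r),c1) \<Rightarrow>
      binom_weight c1 N * bidiff \<theta> (N - c1) (bidiff \<theta> c1 (F a) (G b)) (H r) t))"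
    by (rule sum.reindex_bij_witness[where i="\<lambda>((N,a,b,r),c1). ((N - c1, c1 + a + b, r),(c1,a,b))"
         and j="\<lambda>((c2,q,r),(c1,a,b)). ((c1 + c2,a,b,r), c1)"])
      (auto simp: triples_def quadruples_def binom_weight_def)
  also have "\<dots> = (\<Sum>(N,a,b,r)\<in>quadruples p. assoc_left \<theta> N (F a) (G b) (H r) t)"
    by (subst sum.Sigma[symmetric]) (auto simp: finite_quadruples split_def assoc_left_def)
  finally show ?thesis .
qed

lemma mstar_assoc_expand_right:
  assumes U: "open U" and F: "moyal_elem U F" and G: "moyal_elem U G" and H: "moyal_elem U H"
    and t: "t \<in> U"
  shows "mstar \<theta> F (mstar \<theta> G H) p t =
    (\<Sum>(N,a,b,r)\<in>quadruples p. assoc_right \<theta> N (F a) (G b) (H r) t)"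
proof -
  have sF: "smooth_on U (F a)" "smooth_on U (G a)" "smooth_on U (H a)" for a
    using F G H by (auto simp: moyal_elem_def)
  have "mstar \<theta> F (mstar \<theta> G H) p t =
      (\<Sum>(c2,a,q)\<in>triples p. (1 / fact c2) * bidiff \<theta> c2 (F a) (mstar \<theta> G H q) t)"
    by (rule mstar_triples)
  also have "\<dots> = (\<Sum>(c2,a,q)\<in>triples p. \<Sum>(c1,b,r)\<in>triples q.
      (1 / fact c2) * ((1 / fact c1) * bidiff \<theta> c2 (F a) (bidiff \<theta> c1 (G b) (H r)) t))"
  proof (rule sum.cong[OF refl], clarify)
    fix c2 a q
    have "bidiff \<theta> c2 (F a) (mstar \<theta> G H q) t = bidiff \<theta> c2 (F a) (\<lambda>x. \<Sum>y\<in>triples q.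
        (1 / fact (fst y)) * bidiff \<theta> (fst y) (G (fst (snd y))) (H (snd (snd y))) x) t"
      unfolding mstar_triples_fun by (simp add: split_def)
    also have "\<dots> = (\<Sum>y\<in>triples q. (1 / fact (fst y)) *
        bidiff \<theta> c2 (F a) (bidiff \<theta> (fst y) (G (fst (snd y))) (H (snd (snd y)))) t)"
      by (rule bidiff_lincomb_right[OF U finite_triples _ t]) (intro bidiff_smooth[OF U] sF)
    finally show "(1 / fact c2) * bidiff \<theta> c2 (F a) (mstar \<theta> G H q) t = (\<Sum>(c1,b,r)\<in>triples q.
        (1 / fact c2) * ((1 / fact c1) * bidiff \<theta> c2 (F a) (bidiff \<theta> c1 (G b) (H r)) t))"
      by (simp add: split_def sum_distrib_left)
  qed
  also have "\<dots> = (\<Sum>x\<in>Sigma (triples p) (\<lambda>(c2,a,q). triples q). (case x of ((c2,a,q),(c1,b,r)) \<Rightarrow>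
      (1 / fact c2) * ((1 / fact c1) * bidiff \<theta> c2 (F a) (bidiff \<theta> c1 (G b) (H r)) t)))"
    by (subst sum.Sigma[symmetric]) (auto simp: finite_triples split_def)
  also have "\<dots> = (\<Sum>y\<in>Sigma (quadruples p) (\<lambda>(N,a,b,r). {..N}). (case y of ((N,a,b,r),c1) \<Rightarrow>
      binom_weight c1 N * bidiff \<theta> (N - c1) (F a) (bidiff \<theta> c1 (G b) (H r)) t))"
    by (rule sum.reindex_bij_witness[where i="\<lambda>((N,a,b,r),c1). ((N - c1, a, c1 + b + r),(c1,b,r))"
         and j="\<lambda>((c2,a,q),(c1,b,r)). ((c1 + c2,a,b,r), c1)"])
      (auto simp: triples_def quadruples_def binom_weight_def)
  also have "\<dots> = (\<Sum>(N,a,b,r)\<in>quadruples p. assoc_right \<theta> N (F a) (G b) (H r) t)"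
    by (subst sum.Sigma[symmetric]) (auto simp: finite_quadruples split_def assoc_right_def)
  finally show ?thesis .
qed

lemma mstar_assoc:
  assumes U: "open U" and F: "moyal_elem U F" and G: "moyal_elem U G" and H: "moyal_elem U H"
    and t: "t \<in> U"
  shows "mstar \<theta> (mstar \<theta> F G) H p t = mstar \<theta> F (mstar \<theta> G H) p t"
  unfolding mstar_assoc_expand_left[OF assms] mstar_assoc_expand_right[OF assms]
  using F G H by (intro sum.cong refl) (auto simp: moyal_elem_def intro!: assoc_left_eq_right[OF U _ _ _ t])

lemma mstar_lincomb_left:
  assumes U: "open U" and S: "finite S" and F: "\<And>k. k \<in> S \<Longrightarrow> moyal_elem U (F k)"
    and t: "t \<in> U"
  shows "mstar \<theta> (\<lambda>p x. \<Sum>k\<in>S. a k * F k p x) G p t = (\<Sum>k\<in>S. a k * mstar \<theta> (F k) G p t)"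
proof -
  have "mstar \<theta> (\<lambda>p x. \<Sum>k\<in>S. a k * F k p x) G p t =
      (\<Sum>(c,a',b)\<in>triples p. (1 / fact c) * (\<Sum>k\<in>S. a k * bidiff \<theta> c (F k a') (G b) t))"
    unfolding mstar_triples
    by (rule sum.cong[OF refl], clarify, subst bidiff_lincomb_left[OF U S _ t])
      (use F in \<open>auto simp: moyal_elem_def\<close>)
  also have "\<dots> = (\<Sum>k\<in>S. a k * mstar \<theta> (F k) G p t)"
    unfolding mstar_triples sum_distrib_left split_def
    by (subst sum.swap) (simp add: algebra_simps)
  finally show ?thesis .
qed

lemma mstar_lincomb_right:
  assumes U: "open U" and S: "finite S" and F: "\<And>k. k \<in> S \<Longrightarrow> moyal_elem U (F k)"
    and t: "t \<in> U"
  shows "mstar \<theta> G (\<lambda>p x. \<Sum>k\<in>S. a k * F k p x) p t = (\<Sum>k\<in>S. a k * mstar \<theta> G (F k) p t)"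
proof -
  have "mstar \<theta> G (\<lambda>p x. \<Sum>k\<in>S. a k * F k p x) p t =
      (\<Sum>(c,a',b)\<in>triples p. (1 / fact c) * (\<Sum>k\<in>S. a k * bidiff \<theta> c (G a') (F k b) t))"
    unfolding mstar_triples
    by (rule sum.cong[OF refl], clarify, subst bidiff_lincomb_right[OF U S _ t])
      (use F in \<open>auto simp: moyal_elem_def\<close>)
  also have "\<dots> = (\<Sum>k\<in>S. a k * mstar \<theta> G (F k) p t)"
    unfolding mstar_triples sum_distrib_left split_def
    by (subst sum.swap) (simp add: algebra_simps)
  finally show ?thesis .
qed

lemma mD_lincomb:
  assumes U: "open U" and S: "finite S" and F: "\<And>k. k \<in> S \<Longrightarrow> moyal_elem U (F k)"
    and t: "t \<in> U"
  shows "mD i (\<lambda>p x. \<Sum>k\<in>S. a k * F k p x) p t = (\<Sum>k\<in>S. a k * mD i (F k) p t)"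
proof -
  have "pd i (\<lambda>x. \<Sum>k\<in>S. a k * F k p x) t = (\<Sum>k\<in>S. pd i (\<lambda>x. a k * F k p x) t)"
    by (rule pd_sum[OF S _ t]) (use F U in \<open>auto simp: moyal_elem_def intro: smooth_cmult\<close>)
  also have "\<dots> = (\<Sum>k\<in>S. a k * pd i (F k p) t)"
    by (rule sum.cong[OF refl]) (use F t in \<open>auto simp: moyal_elem_def intro: pd_cmult\<close>)
  finally show ?thesis by (simp add: mD_def)
qed

lemma mD_mstar:
  assumes U: "open U" and F: "moyal_elem U F" and G: "moyal_elem U G" and t: "t \<in> U"
  shows "mD i (mstar \<theta> F G) p t = mstar \<theta> (mD i F) G p t + mstar \<theta> F (mD i G) p t"
proof -
  have sF: "smooth_on U (F a)" "smooth_on U (G a)" for a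
    using F G by (auto simp: moyal_elem_def)
  have "mD i (mstar \<theta> F G) p t = pd i (\<lambda>t. \<Sum>y\<in>triples p. (1 / fact (fst y)) * bidiff \<theta> (fst y) (F (fst (snd y))) (G (snd (snd y))) t) t"
    unfolding mD_def mstar_triples_fun split_def by simp
  also have "\<dots> = (\<Sum>y\<in>triples p. pd i (\<lambda>t. (1 / fact (fst y)) * bidiff \<theta> (fst y) (F (fst (snd y))) (G (snd (snd y))) t) t)"
    by (rule pd_sum[OF finite_triples _ t]) (intro smooth_cmult[OF U] bidiff_smooth[OF U] sF)
  also have "\<dots> = (\<Sum>y\<in>triples p. (1 / fact (fst y)) * (bidiff \<theta> (fst y) (pd i (F (fst (snd y)))) (G (snd (snd y))) t
         + bidiff \<theta> (fst y) (F (fst (snd y))) (pd i (G (snd (snd y)))) t))"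
    by (rule sum.cong[OF refl], subst pd_cmult[OF bidiff_smooth[OF U sF] t], subst pd_bidiff[OF U sF t]) simp
  also have "\<dots> = mstar \<theta> (mD i F) G p t + mstar \<theta> F (mD i G) p t"
    unfolding mstar_triples split_def mD_def by (simp add: sum.distrib distrib_left)
  finally show ?thesis .
qed

lemma mD_comm:
  assumes U: "open U" and F: "moyal_elem U F" and t: "t \<in> U"
  shows "mD i (mD j F) p t = mD j (mD i F) p t"
  unfolding mD_def using schwarz[OF U _ t] F by (simp add: moyal_elem_def)

lemma mone_fun: "mone a = (\<lambda>x. if a = 0 then 1 else 0)"
  by (simp add: mone_def)

lemma mstar_mone_left: "mstar \<theta> mone F p t = F p t"
proof -
  have "mstar \<theta> mone F p t = (\<Sum>c\<le>p. \<Sum>a\<le>p - c. (if c = 0 then (if a = 0 then F (p - c - a) t else 0) else 0))"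
    unfolding mstar_bidiff mone_fun bidiff_const_left by (intro sum.cong refl) auto
  also have "\<dots> = (\<Sum>c\<le>p. if c = 0 then (\<Sum>a\<le>p - c. if a = 0 then F (p - c - a) t else 0) else 0)"
    by (rule sum.cong) auto
  also have "\<dots> = F p t" by (simp add: sum.delta)
  finally show ?thesis .
qed

lemma mstar_mone_right: "mstar \<theta> F mone p t = F p t"
proof -
  have "mstar \<theta> F mone p t = (\<Sum>c\<le>p. \<Sum>a\<le>p - c. (if c = 0 then (if a = p then F a t else 0) else 0))"
    unfolding mstar_bidiff mone_fun bidiff_const_right by (intro sum.cong refl) auto
  also have "\<dots> = (\<Sum>c\<le>p. if c = 0 then (\<Sum>a\<le>p - c. if a = p then F a t else 0) else 0)"
    by (rule sum.cong) auto
  also have "\<dots> = F p t" by (simp add: sum.delta)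
  finally show ?thesis .
qed

lemma mD_const: "mD i (\<lambda>p x. k p) = (\<lambda>p x. 0)"
  by (intro ext) (simp add: mD_def pd_def)

lemma mstar_local:
  assumes U: "open U" and "eqU U F F'" "eqU U G G'" and t: "t \<in> U"
  shows "mstar \<theta> F G p t = mstar \<theta> F' G' p t"
proof -
  have "\<And>c a b. bidiff \<theta> c (F a) (G b) t = bidiff \<theta> c (F' a) (G' b) t"
    by (rule bidiff_local[OF U _ _ t]) (use assms in \<open>auto simp: eqU_def\<close>)
  then show ?thesis unfolding mstar_bidiff by simp
qed

lemma mD_local:
  assumes U: "open U" and "eqU U F F'" and t: "t \<in> U"
  shows "mD i F p t = mD i F' p t"
  unfolding mD_def using assms pd_local[OF U t] by (simp add: eqU_def)

lemma moyal_mD: "moyal_elem U F \<Longrightarrow> moyal_elem U (mD i F)"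
  by (simp add: moyal_elem_def mD_def smooth_pd)

lemma moyal_lincomb:
  assumes U: "open U" and "\<And>k. k \<in> S \<Longrightarrow> moyal_elem U (F k)"
  shows "moyal_elem U (\<lambda>p x. \<Sum>k\<in>S. a k * F k p x)"
  using assms unfolding moyal_elem_def by (auto intro!: smooth_sum smooth_cmult)


section \<open>Admissible elements: the Moyal algebra with genuine equalities\<close>

text \<open>The statement compares elements only on U (relation eqU).  Cutting an element off to
  zero outside U picks a canonical representative of its eqU-class, so that eqU becomes
  equality.\<close>

definition zero_off :: "(real^'n::finite) set \<Rightarrow> 'n moyal \<Rightarrow> 'n moyal" where
  "zero_off U F = (\<lambda>p t. if t \<in> U then F p t else 0)"

lemma zero_off_apply: "zero_off U F p t = (if t \<in> U then F p t else 0)"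
  by (simp add: zero_off_def)

lemma zero_off_idem[simp]: "zero_off U (zero_off U F) = zero_off U F"
  by (simp add: zero_off_def fun_eq_iff)

lemma eqU_zero_off: "eqU U F (zero_off U F)"
  by (simp add: eqU_def zero_off_def)

lemma eqU_iff: "eqU U F G \<longleftrightarrow> zero_off U F = zero_off U G"
proof
  assume "eqU U F G" then show "zero_off U F = zero_off U G"
    by (auto simp: eqU_def zero_off_apply fun_eq_iff)
next
  assume "zero_off U F = zero_off U G"
  then have "zero_off U F p t = zero_off U G p t" for p t by simp
  then show "eqU U F G" unfolding eqU_def zero_off_apply by metis
qed

lemma zero_off_madd: "zero_off U (madd F G) = madd (zero_off U F) (zero_off U G)"
  by (simp add: zero_off_def madd_def fun_eq_iff)
lemma zero_off_mdiff: "zero_off U (mdiff F G) = mdiff (zero_off U F) (zero_off U G)"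
  by (simp add: zero_off_def mdiff_def fun_eq_iff)
lemma zero_off_mneg: "zero_off U (mneg F) = mneg (zero_off U F)"
  by (simp add: zero_off_def mneg_def fun_eq_iff)
lemma zero_off_msmult: "zero_off U (msmult c F) = msmult c (zero_off U F)"
  by (simp add: zero_off_def msmult_def fun_eq_iff)
lemma zero_off_msum: "zero_off U (msum F S) = msum (\<lambda>k. zero_off U (F k)) S"
  by (simp add: zero_off_def msum_def fun_eq_iff)
lemma zero_off_mzero: "zero_off U mzero = mzero"
  by (simp add: zero_off_def mzero_def fun_eq_iff)
lemma zero_off_if: "zero_off U (if b then F else G) = (if b then zero_off U F else zero_off U G)"
  by simp

text \<open>All linear operations are instances of a real linear combination, so that the
  linearity facts below need only be proved once.\<close>

lemma madd_lincomb: "madd F G = (\<lambda>p x. \<Sum>b\<in>{True,False}. (\<lambda>_. 1::real) b * (if b then F else G) p x)"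
  by (auto simp: madd_def fun_eq_iff)
lemma mdiff_lincomb:
  "mdiff F G = (\<lambda>p x. \<Sum>b\<in>{True,False}. (\<lambda>b. if b then 1 else -1::real) b * (if b then F else G) p x)"
  by (auto simp: mdiff_def fun_eq_iff)
lemma mneg_lincomb: "mneg F = (\<lambda>p x. \<Sum>b\<in>{()}. (\<lambda>_. -1::real) b * (\<lambda>_. F) b p x)"
  by (auto simp: mneg_def fun_eq_iff)
lemma msum_lincomb: "msum F S = (\<lambda>p x. \<Sum>k\<in>S. (\<lambda>_. 1::real) k * F k p x)"
  by (auto simp: msum_def fun_eq_iff)
lemma mzero_lincomb: "mzero = (\<lambda>p x. \<Sum>k\<in>{}. (\<lambda>_. 1::real) k * (\<lambda>_::unit. mzero) k p x)"
  by (auto simp: mzero_def fun_eq_iff)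

lemma msum_swap: "msum (\<lambda>k. msum (\<lambda>l. F k l) B) A = msum (\<lambda>l. msum (\<lambda>k. F k l) A) B"
  unfolding msum_def by (intro ext) (rule sum.swap)
lemma msum_rot3:
  "msum (\<lambda>a. msum (\<lambda>b. msum (\<lambda>c. F a b c) C) B) A = msum (\<lambda>b. msum (\<lambda>c. msum (\<lambda>a. F a b c) A) C) B"
  by (subst msum_swap) (subst msum_swap, rule refl)
lemma msum_madd: "msum (\<lambda>k. madd (A k) (B k)) S = madd (msum A S) (msum B S)"
  unfolding msum_def madd_def by (simp add: sum.distrib)
lemma msum_mdiff: "msum (\<lambda>k. mdiff (A k) (B k)) S = mdiff (msum A S) (msum B S)"
  unfolding msum_def mdiff_def by (simp add: sum_subtractf)
lemma msum_mneg: "msum (\<lambda>k. mneg (A k)) S = mneg (msum A S)"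
  unfolding msum_def mneg_def by (simp add: sum_negf)
lemma msum_delta_left: "msum (\<lambda>k. if j = k then Y k else mzero) (UNIV :: 'a::finite set) = Y j"
  unfolding msum_def mzero_def by (simp add: if_distrib[of "\<lambda>F. F _ _"] cong: if_cong)
lemma msum_delta_right: "msum (\<lambda>k. if k = j then Y k else mzero) (UNIV :: 'a::finite set) = Y j"
  unfolding msum_def mzero_def by (simp add: if_distrib[of "\<lambda>F. F _ _"] cong: if_cong)
lemma mdiff_madd_left: "mdiff (madd A B) B = A"
  unfolding mdiff_def madd_def by simp
lemma mdiff_madd_right: "mdiff (madd B A) B = A"
  unfolding mdiff_def madd_def by simp
lemma madd_eq_mzero: "madd A B = mzero \<Longrightarrow> B = mneg A"
  unfolding madd_def mzero_def mneg_def by (simp add: fun_eq_iff add_eq_0_iff)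
lemma madd_eq_mzero': "madd A B = mzero \<Longrightarrow> A = mneg B"
  unfolding madd_def mzero_def mneg_def by (simp add: fun_eq_iff add_eq_0_iff)

locale moyal_on =
  fixes U :: "(real^'n::finite) set" and \<theta> :: "'n \<Rightarrow> 'n \<Rightarrow> real"
  assumes open_U: "open U"
begin

definition adm :: "'n moyal \<Rightarrow> bool" where
  "adm F \<longleftrightarrow> moyal_elem U F \<and> zero_off U F = F"

definition mul :: "'n moyal \<Rightarrow> 'n moyal \<Rightarrow> 'n moyal" where
  "mul F G = zero_off U (mstar \<theta> F G)"

definition der :: "'n \<Rightarrow> 'n moyal \<Rightarrow> 'n moyal" where
  "der i F = zero_off U (mD i F)"

definition oneU :: "'n moyal" where
  "oneU = zero_off U mone"

lemma moyal_zero_off: "moyal_elem U (zero_off U F) \<longleftrightarrow> moyal_elem U F"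
  unfolding moyal_elem_def
proof (intro iff_allI iffI)
  fix p
  show "smooth_on U (zero_off U F p) \<Longrightarrow> smooth_on U (F p)"
    by (erule smooth_local[OF open_U]) (simp add: zero_off_apply)
  show "smooth_on U (F p) \<Longrightarrow> smooth_on U (zero_off U F p)"
    by (erule smooth_local[OF open_U]) (simp add: zero_off_apply)
qed

lemma zero_off_mstar: "zero_off U (mstar \<theta> F G) = mul (zero_off U F) (zero_off U G)"
  unfolding mul_def
  by (auto simp: fun_eq_iff zero_off_apply intro!: mstar_local[OF open_U eqU_zero_off eqU_zero_off])

lemma zero_off_mD: "zero_off U (mD i F) = der i (zero_off U F)"
  unfolding der_def
  by (auto simp: fun_eq_iff zero_off_apply intro!: mD_local[OF open_U eqU_zero_off])

lemma zero_off_mone: "zero_off U mone = oneU"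
  by (simp add: oneU_def)

lemmas zero_off_simps = zero_off_mstar zero_off_mD zero_off_madd zero_off_mdiff zero_off_mneg
  zero_off_msmult zero_off_msum zero_off_mone zero_off_mzero zero_off_if

lemma mstar_zero_off_left: "t \<in> U \<Longrightarrow> mstar \<theta> (zero_off U F) G p t = mstar \<theta> F G p t"
  by (rule mstar_local[OF open_U]) (auto simp: eqU_def zero_off_def)
lemma mstar_zero_off_right: "t \<in> U \<Longrightarrow> mstar \<theta> F (zero_off U G) p t = mstar \<theta> F G p t"
  by (rule mstar_local[OF open_U]) (auto simp: eqU_def zero_off_def)
lemma mD_zero_off: "t \<in> U \<Longrightarrow> mD i (zero_off U F) p t = mD i F p t"
  by (rule mD_local[OF open_U]) (auto simp: eqU_def zero_off_def)

lemma adm_zero_off: "moyal_elem U F \<Longrightarrow> adm (zero_off U F)"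
  by (simp add: adm_def moyal_zero_off)

lemma admD: "adm F \<Longrightarrow> moyal_elem U F"
  by (simp add: adm_def)

lemma zero_off_adm: "adm F \<Longrightarrow> zero_off U F = F"
  by (simp add: adm_def)

lemma adm_mul[simp]: "adm F \<Longrightarrow> adm G \<Longrightarrow> adm (mul F G)"
  unfolding mul_def by (intro adm_zero_off moyal_mstar[OF open_U] admD)

lemma adm_der[simp]: "adm F \<Longrightarrow> adm (der i F)"
  unfolding der_def by (intro adm_zero_off moyal_mD admD)



lemma adm_lincomb:
  assumes "\<And>k. k \<in> S \<Longrightarrow> adm (F k)"
  shows "adm (\<lambda>p x. \<Sum>k\<in>S. a k * F k p x)"
proof -
  have "moyal_elem U (\<lambda>p x. \<Sum>k\<in>S. a k * F k p x)"
    by (rule moyal_lincomb[OF open_U]) (use assms admD in auto)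
  moreover have "zero_off U (\<lambda>p x. \<Sum>k\<in>S. a k * F k p x) = (\<lambda>p x. \<Sum>k\<in>S. a k * F k p x)"
  proof -
    have "F k p x = 0" if "k \<in> S" "x \<notin> U" for k p x
      using zero_off_adm[OF assms[OF that(1)]] that(2) by (metis zero_off_def)
    then show ?thesis by (auto simp: zero_off_def fun_eq_iff)
  qed
  ultimately show ?thesis by (simp add: adm_def)
qed

lemma adm_madd[simp]: "adm F \<Longrightarrow> adm G \<Longrightarrow> adm (madd F G)"
  unfolding madd_lincomb by (rule adm_lincomb) auto
lemma adm_msum[simp]: "(\<And>k. k \<in> S \<Longrightarrow> adm (F k)) \<Longrightarrow> adm (msum F S)"
  unfolding msum_lincomb by (rule adm_lincomb) auto

lemma mul_assoc:
  assumes "adm F" "adm G" "adm H"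
  shows "mul (mul F G) H = mul F (mul G H)"
  unfolding mul_def
  by (auto simp: fun_eq_iff zero_off_apply mstar_zero_off_left mstar_zero_off_right
        intro!: mstar_assoc[OF open_U] admD assms)

lemma mul_lincomb_left:
  assumes "finite S" "\<And>k. k \<in> S \<Longrightarrow> adm (F k)"
  shows "mul (\<lambda>p x. \<Sum>k\<in>S. a k * F k p x) G = (\<lambda>p x. \<Sum>k\<in>S. a k * mul (F k) G p x)"
  unfolding mul_def
  by (auto simp: fun_eq_iff zero_off_def mstar_lincomb_left[OF open_U assms(1)] admD assms(2))

lemma mul_lincomb_right:
  assumes "finite S" "\<And>k. k \<in> S \<Longrightarrow> adm (F k)"
  shows "mul G (\<lambda>p x. \<Sum>k\<in>S. a k * F k p x) = (\<lambda>p x. \<Sum>k\<in>S. a k * mul G (F k) p x)"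
  unfolding mul_def
  by (auto simp: fun_eq_iff zero_off_def mstar_lincomb_right[OF open_U assms(1)] admD assms(2))

lemma der_lincomb:
  assumes "finite S" "\<And>k. k \<in> S \<Longrightarrow> adm (F k)"
  shows "der i (\<lambda>p x. \<Sum>k\<in>S. a k * F k p x) = (\<lambda>p x. \<Sum>k\<in>S. a k * der i (F k) p x)"
  unfolding der_def
  by (auto simp: fun_eq_iff zero_off_def mD_lincomb[OF open_U assms(1)] admD assms(2))

lemma mul_madd_left: "adm F \<Longrightarrow> adm G \<Longrightarrow> mul (madd F G) H = madd (mul F H) (mul G H)"
  unfolding madd_lincomb by (subst mul_lincomb_left) auto
lemma mul_madd_right: "adm F \<Longrightarrow> adm G \<Longrightarrow> mul H (madd F G) = madd (mul H F) (mul H G)"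
  unfolding madd_lincomb by (subst mul_lincomb_right) auto
lemma mul_mdiff_right: "adm F \<Longrightarrow> adm G \<Longrightarrow> mul H (mdiff F G) = mdiff (mul H F) (mul H G)"
  unfolding mdiff_lincomb by (subst mul_lincomb_right) auto
lemma mul_mneg_left: "adm F \<Longrightarrow> mul (mneg F) H = mneg (mul F H)"
  unfolding mneg_lincomb by (subst mul_lincomb_left) auto
lemma mul_mneg_right: "adm F \<Longrightarrow> mul H (mneg F) = mneg (mul H F)"
  unfolding mneg_lincomb by (subst mul_lincomb_right) auto
lemma mul_msum_left:
  "finite S \<Longrightarrow> (\<And>k. k \<in> S \<Longrightarrow> adm (F k)) \<Longrightarrow> mul (msum F S) H = msum (\<lambda>k. mul (F k) H) S"
  unfolding msum_lincomb by (subst mul_lincomb_left) auto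
lemma mul_msum_right:
  "finite S \<Longrightarrow> (\<And>k. k \<in> S \<Longrightarrow> adm (F k)) \<Longrightarrow> mul H (msum F S) = msum (\<lambda>k. mul H (F k)) S"
  unfolding msum_lincomb by (subst mul_lincomb_right) auto
lemma mul_mzero_left: "mul mzero H = mzero"
  by (subst mzero_lincomb, subst mul_lincomb_left) (auto simp: mzero_def)
lemma mul_mzero_right: "mul H mzero = mzero"
  by (subst mzero_lincomb, subst mul_lincomb_right) (auto simp: mzero_def)
lemma der_msum:
  "finite S \<Longrightarrow> (\<And>k. k \<in> S \<Longrightarrow> adm (F k)) \<Longrightarrow> der i (msum F S) = msum (\<lambda>k. der i (F k)) S"
  unfolding msum_lincomb by (subst der_lincomb) auto

lemma mul_oneU_left: "adm F \<Longrightarrow> mul oneU F = F"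
  unfolding mul_def oneU_def
  by (auto simp: fun_eq_iff zero_off_apply mstar_zero_off_left mstar_mone_left dest!: zero_off_adm)
    (metis zero_off_def)

lemma mul_oneU_right: "adm F \<Longrightarrow> mul F oneU = F"
  unfolding mul_def oneU_def
  by (auto simp: fun_eq_iff zero_off_apply mstar_zero_off_right mstar_mone_right dest!: zero_off_adm)
    (metis zero_off_def)

lemma der_mzero: "der i mzero = mzero"
  by (simp add: der_def mzero_def mD_const[of i "\<lambda>p. 0", simplified] zero_off_def fun_eq_iff)

lemma der_oneU: "der i oneU = mzero"
proof -
  have "mD i (zero_off U mone) p t = 0" if "t \<in> U" for p t
    using mD_zero_off[OF that] mD_const[of i "\<lambda>p. if p = 0 then 1 else 0"]
    by (simp add: mone_def fun_eq_iff)
  then show ?thesis by (simp add: der_def oneU_def zero_off_def mzero_def fun_eq_iff)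
qed

lemma der_mul: "adm F \<Longrightarrow> adm G \<Longrightarrow> der i (mul F G) = madd (mul (der i F) G) (mul F (der i G))"
  unfolding mul_def der_def
  by (auto simp: fun_eq_iff zero_off_apply madd_def mstar_zero_off_left mstar_zero_off_right
      mD_zero_off intro!: mD_mstar[OF open_U] admD)

lemma der_comm: "adm F \<Longrightarrow> der i (der j F) = der j (der i F)"
  unfolding der_def
  by (auto simp: fun_eq_iff zero_off_apply mD_zero_off intro!: mD_comm[OF open_U] admD)

lemma mul_if_left: "adm Y \<Longrightarrow> mul (if b then oneU else mzero) Y = (if b then Y else mzero)"
  by (simp add: mul_oneU_left mul_mzero_left)

lemma mul_if_right: "adm Y \<Longrightarrow> mul Y (if b then oneU else mzero) = (if b then Y else mzero)"
  by (simp add: mul_oneU_right mul_mzero_right)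

text \<open>Rewrite rules bringing products of sums into a normal form: sums of right-nested products.\<close>

lemmas mul_normalize = mul_msum_left mul_msum_right mul_assoc mul_madd_left
  mul_madd_right mul_mneg_left mul_mneg_right msum_madd msum_mneg

end


section \<open>An embedded noncommutative space with admissible data\<close>

text \<open>X is the embedding and gi the inverse metric, both admissible; the two hypotheses
  say that gi is a two-sided inverse of the metric g_ij = sum_alpha d_i X^alpha * d_j X^alpha.
  The definitions below mirror those of the theory Defs, with the Moyal product and d_i
  replaced by their cut-off versions mul and der.\<close>

locale embedded_space = moyal_on U \<theta> for U :: "(real^'n::finite) set" and \<theta> +
  fixes X :: "'m::finite \<Rightarrow> 'n moyal" and gi :: "'n \<Rightarrow> 'n \<Rightarrow> 'n moyal"
  assumes adm_X[simp]: "\<And>\<alpha>. adm (X \<alpha>)" and adm_gi[simp]: "\<And>i j. adm (gi i j)"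
    and ginv_right: "\<And>i k. msum (\<lambda>j. mul (msum (\<lambda>\<alpha>. mul (der i (X \<alpha>)) (der j (X \<alpha>))) UNIV)
                                       (gi j k)) UNIV = (if i = k then oneU else mzero)"
    and ginv_left: "\<And>i k. msum (\<lambda>j. mul (gi i j)
                     (msum (\<lambda>\<alpha>. mul (der j (X \<alpha>)) (der k (X \<alpha>))) UNIV)) UNIV = (if i = k then oneU else mzero)"
begin

text \<open>The frames E_j, tilde E^j (Et), E^j (Eu), the metric, the projection e, and the two
  contractions of d_i E_j with E_l that will turn out to be Gamma and tilde Gamma.\<close>

definition E :: "'n \<Rightarrow> 'm \<Rightarrow> 'n moyal" where
  "E j \<alpha> = der j (X \<alpha>)"
definition g :: "'n \<Rightarrow> 'n \<Rightarrow> 'n moyal" where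
  "g i j = msum (\<lambda>\<alpha>. mul (E i \<alpha>) (E j \<alpha>)) UNIV"
definition Et :: "'n \<Rightarrow> 'm \<Rightarrow> 'n moyal" where
  "Et j \<alpha> = msum (\<lambda>l. mul (E l \<alpha>) (gi l j)) UNIV"
definition Eu :: "'n \<Rightarrow> 'm \<Rightarrow> 'n moyal" where
  "Eu j \<alpha> = msum (\<lambda>k. mul (gi j k) (E k \<alpha>)) UNIV"
definition e :: "'m \<Rightarrow> 'm \<Rightarrow> 'n moyal" where
  "e \<alpha> \<beta> = msum (\<lambda>j. mul (Et j \<alpha>) (E j \<beta>)) UNIV"
definition dE_E :: "'n \<Rightarrow> 'n \<Rightarrow> 'n \<Rightarrow> 'n moyal" where
  "dE_E i j l = msum (\<lambda>\<alpha>. mul (der i (E j \<alpha>)) (E l \<alpha>)) UNIV"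
definition E_dE :: "'n \<Rightarrow> 'n \<Rightarrow> 'n \<Rightarrow> 'n moyal" where
  "E_dE i j l = msum (\<lambda>\<alpha>. mul (E j \<alpha>) (der i (E l \<alpha>))) UNIV"
definition delta :: "'n \<Rightarrow> 'n \<Rightarrow> 'n moyal" where
  "delta i k = (if i = k then oneU else mzero)"

lemma adm_E[simp]: "adm (E j \<alpha>)" by (simp add: E_def)
lemma adm_g[simp]: "adm (g i j)" by (simp add: g_def)
lemma adm_Et[simp]: "adm (Et j \<alpha>)" by (simp add: Et_def)
lemma adm_Eu[simp]: "adm (Eu j \<alpha>)" by (simp add: Eu_def)
lemma adm_e[simp]: "adm (e \<alpha> \<beta>)" by (simp add: e_def)
lemma adm_dE_E[simp]: "adm (dE_E i j l)" by (simp add: dE_E_def)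
lemma adm_E_dE[simp]: "adm (E_dE i j l)" by (simp add: E_dE_def)

lemma g_ginv: "msum (\<lambda>j. mul (g i j) (gi j k)) UNIV = delta i k"
  using ginv_right by (simp add: g_def E_def delta_def)
lemma ginv_g: "msum (\<lambda>j. mul (gi i j) (g j k)) UNIV = delta i k"
  using ginv_left by (simp add: g_def E_def delta_def)

lemma mul_delta_left: "adm Y \<Longrightarrow> mul (delta i k) Y = (if i = k then Y else mzero)"
  by (simp add: delta_def mul_if_left)
lemma mul_delta_right: "adm Y \<Longrightarrow> mul Y (delta i k) = (if i = k then Y else mzero)"
  by (simp add: delta_def mul_if_right)

lemma der_delta_product:
  fixes A B :: "'k::finite \<Rightarrow> 'n moyal"
  assumes "msum (\<lambda>k. mul (A k) (B k)) UNIV = delta j m" "\<And>k. adm (A k)" "\<And>k. adm (B k)"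
  shows "madd (msum (\<lambda>k. mul (der i (A k)) (B k)) UNIV) (msum (\<lambda>k. mul (A k) (der i (B k))) UNIV)
      = mzero"
proof -
  have "madd (msum (\<lambda>k. mul (der i (A k)) (B k)) UNIV) (msum (\<lambda>k. mul (A k) (der i (B k))) UNIV)
      = der i (msum (\<lambda>k. mul (A k) (B k)) UNIV)"
    using assms(2,3) by (simp add: der_msum der_mul msum_madd)
  also have "\<dots> = mzero" by (simp add: assms(1) delta_def der_oneU der_mzero)
  finally show ?thesis .
qed

lemma der_E_comm: "der i (E j \<alpha>) = der j (E i \<alpha>)"
  by (simp add: E_def der_comm)

lemma dE_E_sym: "dE_E i j l = dE_E j i l"
  by (simp add: dE_E_def der_E_comm)
lemma E_dE_sym: "E_dE i j l = E_dE l j i"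
  by (simp add: E_dE_def der_E_comm)

lemma der_g: "der i (g j l) = madd (dE_E i j l) (E_dE i j l)"
  by (simp add: g_def dE_E_def E_dE_def der_msum der_mul msum_madd)

lemma E_Etil_dual: "msum (\<lambda>\<alpha>. mul (E j \<alpha>) (Et k \<alpha>)) UNIV = delta j k"
proof -
  have "msum (\<lambda>\<alpha>. mul (E j \<alpha>) (Et k \<alpha>)) UNIV = msum (\<lambda>l. mul (g j l) (gi l k)) UNIV"
    unfolding Et_def g_def by (simp add: mul_normalize) (rule msum_swap)
  then show ?thesis by (simp add: g_ginv)
qed

lemma E_proj: "msum (\<lambda>\<alpha>. mul (E j \<alpha>) (e \<alpha> \<beta>)) UNIV = E j \<beta>"
proof -
  have "msum (\<lambda>\<alpha>. mul (E j \<alpha>) (e \<alpha> \<beta>)) UNIV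
      = msum (\<lambda>k. mul (msum (\<lambda>\<alpha>. mul (E j \<alpha>) (Et k \<alpha>)) UNIV) (E k \<beta>)) UNIV"
    unfolding e_def by (simp add: mul_normalize) (rule msum_swap)
  then show ?thesis by (simp add: E_Etil_dual mul_delta_left msum_delta_left)
qed

lemma proj_Etil: "msum (\<lambda>\<beta>. mul (e \<alpha> \<beta>) (Et k \<beta>)) UNIV = Et k \<alpha>"
proof -
  have "msum (\<lambda>\<beta>. mul (e \<alpha> \<beta>) (Et k \<beta>)) UNIV
      = msum (\<lambda>j. mul (Et j \<alpha>) (msum (\<lambda>\<beta>. mul (E j \<beta>) (Et k \<beta>)) UNIV)) UNIV"
    unfolding e_def by (simp add: mul_normalize) (rule msum_swap)
  then show ?thesis by (simp add: E_Etil_dual mul_delta_right msum_delta_right)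
qed

lemma proj_E: "msum (\<lambda>\<beta>. mul (e \<alpha> \<beta>) (E j \<beta>)) UNIV = E j \<alpha>"
proof -
  have "msum (\<lambda>\<beta>. mul (e \<alpha> \<beta>) (E j \<beta>)) UNIV = msum (\<lambda>k. mul (Et k \<alpha>) (g k j)) UNIV"
    unfolding e_def g_def by (simp add: mul_normalize) (rule msum_swap)
  also have "\<dots> = msum (\<lambda>l. mul (E l \<alpha>) (msum (\<lambda>k. mul (gi l k) (g k j)) UNIV)) UNIV"
    unfolding Et_def by (simp add: mul_normalize) (rule msum_swap)
  finally show ?thesis by (simp add: ginv_g mul_delta_right msum_delta_right)
qed

definition cG :: "'n \<Rightarrow> 'n \<Rightarrow> 'n \<Rightarrow> 'n moyal" where
  "cG i j l = msmult (1/2) (mdiff (madd (der i (g j l)) (der j (g l i))) (der l (g j i)))"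
definition Ups :: "'n \<Rightarrow> 'n \<Rightarrow> 'n \<Rightarrow> 'n moyal" where
  "Ups i j l = msmult (1/2) (mdiff (msum (\<lambda>\<alpha>. mul (der i (E j \<alpha>)) (E l \<alpha>)) UNIV)
                                  (msum (\<lambda>\<alpha>. mul (E l \<alpha>) (der i (E j \<alpha>))) UNIV))"
definition Gl :: "'n \<Rightarrow> 'n \<Rightarrow> 'n \<Rightarrow> 'n moyal" where
  "Gl i j l = madd (cG i j l) (Ups i j l)"
definition Gtl :: "'n \<Rightarrow> 'n \<Rightarrow> 'n \<Rightarrow> 'n moyal" where
  "Gtl i j l = mdiff (cG i j l) (Ups i j l)"
definition Gu :: "'n \<Rightarrow> 'n \<Rightarrow> 'n \<Rightarrow> 'n moyal" where
  "Gu i j k = msum (\<lambda>l. mul (Gl i j l) (gi l k)) UNIV"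
definition Gtu :: "'n \<Rightarrow> 'n \<Rightarrow> 'n \<Rightarrow> 'n moyal" where
  "Gtu i j k = msum (\<lambda>l. mul (gi k l) (Gtl i j l)) UNIV"
definition nab :: "'n \<Rightarrow> ('m \<Rightarrow> 'n moyal) \<Rightarrow> 'm \<Rightarrow> 'n moyal" where
  "nab i \<zeta> \<beta> = mdiff (der i (\<zeta> \<beta>)) (msum (\<lambda>\<alpha>. mul (\<zeta> \<alpha>) (der i (e \<alpha> \<beta>))) UNIV)"
definition nabt :: "'n \<Rightarrow> ('m \<Rightarrow> 'n moyal) \<Rightarrow> 'm \<Rightarrow> 'n moyal" where
  "nabt i \<xi> \<alpha> = mdiff (der i (\<xi> \<alpha>)) (msum (\<lambda>\<beta>. mul (der i (e \<alpha> \<beta>)) (\<xi> \<beta>)) UNIV)"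

text \<open>The key simplification: Gamma_ijl = d_i E_j * (E_l)^t and
  tilde Gamma_ijl = E_l * d_i (E_j)^t, by the symmetry d_i E_j = d_j E_i.\<close>

lemma Gl_eq_dE_E: "Gl i j l = dE_E i j l"
  unfolding Gl_def cG_def Ups_def der_g dE_E_sym[of l j i] E_dE_sym[of l j i] E_dE_sym[of j l i]
  unfolding dE_E_def[of i j l, symmetric] E_dE_def[of i l j, symmetric]
  by (simp add: madd_def mdiff_def msmult_def fun_eq_iff field_simps)

lemma Gtl_eq_E_dE: "Gtl i j l = E_dE i l j"
  unfolding Gtl_def cG_def Ups_def der_g dE_E_sym[of l j i] E_dE_sym[of l j i] E_dE_sym[of j l i]
  unfolding dE_E_def[of i j l, symmetric] E_dE_def[of i l j, symmetric]
  by (simp add: madd_def mdiff_def msmult_def fun_eq_iff field_simps)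

lemma adm_Gu[simp]: "adm (Gu i j k)" by (simp add: Gu_def Gl_eq_dE_E)
lemma adm_Gtu[simp]: "adm (Gtu i j k)" by (simp add: Gtu_def Gtl_eq_E_dE)

lemma nab_tangent:
  assumes adm: "\<And>\<alpha>. adm (\<zeta> \<alpha>)" and fixed: "\<And>\<beta>. msum (\<lambda>\<alpha>. mul (\<zeta> \<alpha>) (e \<alpha> \<beta>)) UNIV = \<zeta> \<beta>"
  shows "nab i \<zeta> \<beta> = msum (\<lambda>\<alpha>. mul (der i (\<zeta> \<alpha>)) (e \<alpha> \<beta>)) UNIV"
proof -
  have "der i (\<zeta> \<beta>) = der i (msum (\<lambda>\<alpha>. mul (\<zeta> \<alpha>) (e \<alpha> \<beta>)) UNIV)" by (simp only: fixed)
  also have "\<dots> = madd (msum (\<lambda>\<alpha>. mul (der i (\<zeta> \<alpha>)) (e \<alpha> \<beta>)) UNIV)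
                       (msum (\<lambda>\<alpha>. mul (\<zeta> \<alpha>) (der i (e \<alpha> \<beta>))) UNIV)"
    using adm by (simp add: der_msum der_mul msum_madd)
  finally show ?thesis unfolding nab_def by (simp add: mdiff_madd_left)
qed

lemma nabt_tangent:
  assumes adm: "\<And>\<alpha>. adm (\<xi> \<alpha>)" and fixed: "\<And>\<alpha>. msum (\<lambda>\<beta>. mul (e \<alpha> \<beta>) (\<xi> \<beta>)) UNIV = \<xi> \<alpha>"
  shows "nabt i \<xi> \<alpha> = msum (\<lambda>\<beta>. mul (e \<alpha> \<beta>) (der i (\<xi> \<beta>))) UNIV"
proof -
  have "der i (\<xi> \<alpha>) = der i (msum (\<lambda>\<beta>. mul (e \<alpha> \<beta>) (\<xi> \<beta>)) UNIV)" by (simp only: fixed)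
  also have "\<dots> = madd (msum (\<lambda>\<beta>. mul (der i (e \<alpha> \<beta>)) (\<xi> \<beta>)) UNIV)
                       (msum (\<lambda>\<beta>. mul (e \<alpha> \<beta>) (der i (\<xi> \<beta>))) UNIV)"
    using adm by (simp add: der_msum der_mul msum_madd)
  finally show ?thesis unfolding nabt_def by (simp add: mdiff_madd_right)
qed

lemma nab_E: "nab i (E j) \<beta> = msum (\<lambda>k. mul (Gu i j k) (E k \<beta>)) UNIV"
proof -
  have "nab i (E j) \<beta> = msum (\<lambda>\<alpha>. mul (der i (E j \<alpha>)) (e \<alpha> \<beta>)) UNIV"
    by (rule nab_tangent) (simp_all add: E_proj)
  also have "\<dots> = msum (\<lambda>k. mul (msum (\<lambda>l. mul (dE_E i j l) (gi l k)) UNIV) (E k \<beta>)) UNIV"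
    unfolding e_def Et_def dE_E_def by (simp add: mul_normalize) (rule msum_rot3)
  finally show ?thesis by (simp add: Gu_def Gl_eq_dE_E)
qed

text \<open>Second formula: tilde nabla_i tilde E^j = - tilde E^k * Gamma_ki^j, using
  E_k * d_i tilde E^j = - d_i E_k * tilde E^j (from the duality).\<close>

lemma E_der_Etil:
  "msum (\<lambda>\<beta>. mul (E k \<beta>) (der i (Et j \<beta>))) UNIV
      = mneg (msum (\<lambda>\<beta>. mul (der i (E k \<beta>)) (Et j \<beta>)) UNIV)"
  by (rule madd_eq_mzero[OF der_delta_product[OF E_Etil_dual]]) simp_all

lemma nabt_Et: "nabt i (Et j) \<alpha> = mneg (msum (\<lambda>k. mul (Et k \<alpha>) (Gu k i j)) UNIV)"
proof -
  have dE_Et: "msum (\<lambda>\<beta>. mul (der i (E k \<beta>)) (Et j \<beta>)) UNIV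
      = msum (\<lambda>l. mul (dE_E i k l) (gi l j)) UNIV"
    for k unfolding Et_def dE_E_def by (simp add: mul_normalize) (rule msum_swap)
  have "nabt i (Et j) \<alpha> = msum (\<lambda>\<beta>. mul (e \<alpha> \<beta>) (der i (Et j \<beta>))) UNIV"
    by (rule nabt_tangent) (simp_all add: proj_Etil)
  also have "\<dots> = msum (\<lambda>k. mul (Et k \<alpha>) (msum (\<lambda>\<beta>. mul (E k \<beta>) (der i (Et j \<beta>))) UNIV)) UNIV"
    unfolding e_def by (simp add: mul_normalize) (rule msum_swap)
  also have "\<dots> = msum (\<lambda>k. mul (Et k \<alpha>) (mneg (msum (\<lambda>l. mul (dE_E i k l) (gi l j)) UNIV))) UNIV"
    by (simp only: E_der_Etil dE_Et)
  also have "\<dots> = mneg (msum (\<lambda>k. mul (Et k \<alpha>) (Gu k i j)) UNIV)"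
    by (simp add: Gu_def Gl_eq_dE_E dE_E_sym[of k i for k] mul_normalize)
  finally show ?thesis .
qed

lemma nabt_E: "nabt i (E j) \<alpha> = msum (\<lambda>k. mul (E k \<alpha>) (Gtu i j k)) UNIV"
proof -
  have "nabt i (E j) \<alpha> = msum (\<lambda>\<beta>. mul (e \<alpha> \<beta>) (der i (E j \<beta>))) UNIV"
    by (rule nabt_tangent) (simp_all add: proj_E)
  also have "\<dots> = msum (\<lambda>k. mul (Et k \<alpha>) (E_dE i k j)) UNIV"
    unfolding e_def E_dE_def by (simp add: mul_normalize) (rule msum_swap)
  also have "\<dots> = msum (\<lambda>k. mul (E k \<alpha>) (Gtu i j k)) UNIV"
    unfolding Et_def Gtu_def Gtl_eq_E_dE by (simp add: mul_normalize) (rule msum_swap)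
  finally show ?thesis .
qed

lemma der_ginv:
  "der i (gi j m) = mneg (msum (\<lambda>l. mul (gi j l) (msum (\<lambda>n. mul (der i (g l n)) (gi n m)) UNIV)) UNIV)"
proof -
  have dginv_g: "msum (\<lambda>l. mul (der i (gi j l)) (g l n)) UNIV
      = mneg (msum (\<lambda>l. mul (gi j l) (der i (g l n))) UNIV)" for n
    by (rule madd_eq_mzero'[OF der_delta_product[OF ginv_g]]) simp_all
  have "der i (gi j m) = msum (\<lambda>l. mul (der i (gi j l)) (msum (\<lambda>n. mul (g l n) (gi n m)) UNIV)) UNIV"
    by (simp add: g_ginv mul_delta_right msum_delta_right)
  also have "\<dots> = msum (\<lambda>n. mul (msum (\<lambda>l. mul (der i (gi j l)) (g l n)) UNIV) (gi n m)) UNIV"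
    by (simp add: mul_normalize) (rule msum_swap)
  also have "\<dots> = msum (\<lambda>n. mul (mneg (msum (\<lambda>l. mul (gi j l) (der i (g l n))) UNIV)) (gi n m)) UNIV"
    by (simp only: dginv_g)
  also have "\<dots> = mneg (msum (\<lambda>l. mul (gi j l) (msum (\<lambda>n. mul (der i (g l n)) (gi n m)) UNIV)) UNIV)"
    by (simp add: mul_normalize) (rule arg_cong[where f=mneg], rule msum_swap)
  finally show ?thesis .
qed

lemma der_ginv_Gamma: "madd (der i (gi j m)) (msum (\<lambda>k. mul (gi j k) (Gu i k m)) UNIV)
    = mneg (msum (\<lambda>k. mul (Gtu i k j) (gi k m)) UNIV)"
proof -
  define A where "A = msum (\<lambda>l. msum (\<lambda>n. mul (gi j l) (mul (dE_E i l n) (gi n m))) UNIV) UNIV"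
  define B where "B = msum (\<lambda>l. msum (\<lambda>n. mul (gi j l) (mul (E_dE i l n) (gi n m))) UNIV) UNIV"
  have b: "msum (\<lambda>k. mul (Gtu i k j) (gi k m)) UNIV = B"
    unfolding B_def Gtu_def Gtl_eq_E_dE by (simp add: mul_normalize) (rule msum_swap)
  have a: "msum (\<lambda>k. mul (gi j k) (Gu i k m)) UNIV = A"
    unfolding A_def Gu_def Gl_eq_dE_E by (simp add: mul_normalize)
  have d: "der i (gi j m) = mneg (madd A B)"
    unfolding A_def B_def der_ginv der_g by (simp add: mul_normalize)
  show ?thesis unfolding a b d by (simp add: madd_def mneg_def fun_eq_iff)
qed

text \<open>Third formula: nabla_i E^j = - tilde Gamma_ik^j * E^k, by the Leibniz rule for
  E^j = g^jk * E_k, the first formula and the compatibility identity.\<close>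

lemma nab_Eu_expand: "nab i (Eu j) \<beta> = madd (msum (\<lambda>k. mul (der i (gi j k)) (E k \<beta>)) UNIV)
    (msum (\<lambda>k. mul (gi j k) (nab i (E k) \<beta>)) UNIV)"
proof -
  have eq1: "der i (Eu j \<beta>) = madd (msum (\<lambda>k. mul (der i (gi j k)) (E k \<beta>)) UNIV)
      (msum (\<lambda>k. mul (gi j k) (der i (E k \<beta>))) UNIV)"
    unfolding Eu_def by (simp add: der_msum der_mul msum_madd)
  have eq2: "msum (\<lambda>\<alpha>. mul (Eu j \<alpha>) (der i (e \<alpha> \<beta>))) UNIV
      = msum (\<lambda>k. mul (gi j k) (msum (\<lambda>\<alpha>. mul (E k \<alpha>) (der i (e \<alpha> \<beta>))) UNIV)) UNIV"
    unfolding Eu_def by (simp add: mul_normalize) (rule msum_swap)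
  have eq3: "msum (\<lambda>k. mul (gi j k) (nab i (E k) \<beta>)) UNIV
      = mdiff (msum (\<lambda>k. mul (gi j k) (der i (E k \<beta>))) UNIV)
              (msum (\<lambda>k. mul (gi j k) (msum (\<lambda>\<alpha>. mul (E k \<alpha>) (der i (e \<alpha> \<beta>))) UNIV)) UNIV)"
    unfolding nab_def by (simp add: mul_mdiff_right msum_mdiff)
  show ?thesis unfolding nab_def[of i "Eu j"] eq1 eq2 eq3 by (simp add: madd_def mdiff_def fun_eq_iff)
qed

lemma nab_Eu: "nab i (Eu j) \<beta> = mneg (msum (\<lambda>k. mul (Gtu i k j) (Eu k \<beta>)) UNIV)"
proof -
  have "nab i (Eu j) \<beta> = madd (msum (\<lambda>k. mul (der i (gi j k)) (E k \<beta>)) UNIV)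
      (msum (\<lambda>k. mul (gi j k) (msum (\<lambda>m. mul (Gu i k m) (E m \<beta>)) UNIV)) UNIV)"
    by (simp only: nab_Eu_expand nab_E)
  also have "\<dots> = msum (\<lambda>m. mul (madd (der i (gi j m)) (msum (\<lambda>k. mul (gi j k) (Gu i k m)) UNIV)) (E m \<beta>)) UNIV"
    by (simp add: mul_normalize msum_swap[of "\<lambda>k m. mul (gi j k) (mul (Gu i k m) (E m \<beta>))"])
  also have "\<dots> = msum (\<lambda>m. mul (mneg (msum (\<lambda>k. mul (Gtu i k j) (gi k m)) UNIV)) (E m \<beta>)) UNIV"
    by (simp only: der_ginv_Gamma)
  also have "\<dots> = mneg (msum (\<lambda>k. mul (Gtu i k j) (Eu k \<beta>)) UNIV)"
    unfolding Eu_def by (simp add: mul_normalize) (rule arg_cong[where f=mneg], rule msum_swap)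
  finally show ?thesis .
qed

end

lemma embedded_space_zero_off:
  fixes X :: "'m::finite \<Rightarrow> 'n::finite moyal" and ginv :: "'n \<Rightarrow> 'n \<Rightarrow> 'n moyal"
  assumes "open U"
    and "\<And>\<alpha>. moyal_elem U (X \<alpha>)"
    and "\<And>i j. moyal_elem U (ginv i j)"
    and "\<And>i k. eqU U (msum (\<lambda>j. mstar \<theta> (metric \<theta> X i j) (ginv j k)) UNIV)
                        (if i = k then mone else mzero)"
    and "\<And>i k. eqU U (msum (\<lambda>j. mstar \<theta> (ginv i j) (metric \<theta> X j k)) UNIV)
                        (if i = k then mone else mzero)"
  shows "embedded_space U \<theta> (\<lambda>\<alpha>. zero_off U (X \<alpha>)) (\<lambda>i j. zero_off U (ginv i j))"
proof -
  interpret moyal_on U \<theta> by unfold_locales (rule assms(1))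
  show ?thesis
  proof unfold_locales
    show "adm (zero_off U (X \<alpha>))" for \<alpha> by (rule adm_zero_off[OF assms(2)])
    show "adm (zero_off U (ginv i j))" for i j by (rule adm_zero_off[OF assms(3)])
    show "msum (\<lambda>j. mul (msum (\<lambda>\<alpha>. mul (der i (zero_off U (X \<alpha>))) (der j (zero_off U (X \<alpha>)))) UNIV)
        (zero_off U (ginv j k))) UNIV = (if i = k then oneU else mzero)" for i k
      using assms(4)[of i k] unfolding eqU_iff metric_def by (simp only: zero_off_simps)
    show "msum (\<lambda>j. mul (zero_off U (ginv i j)) (msum (\<lambda>\<alpha>. mul (der j (zero_off U (X \<alpha>)))
        (der k (zero_off U (X \<alpha>)))) UNIV)) UNIV = (if i = k then oneU else mzero)" for i k
      using assms(5)[of i k] unfolding eqU_iff metric_def by (simp only: zero_off_simps)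
  qed
qed

text \<open>Each claim is the corresponding identity of the locale, read through the cut-off:
  eqU becomes equality of cut-offs, and the cut-off commutes with all operations.\<close>

theorem lemma4p3:
  fixes U :: "(real^'n::finite) set"
    and \<theta> :: "'n \<Rightarrow> 'n \<Rightarrow> real"
    and X :: "'m::finite \<Rightarrow> 'n moyal"
    and ginv :: "'n \<Rightarrow> 'n \<Rightarrow> 'n moyal"
  assumes "open U"
    and "\<And>i j. \<theta> i j = - \<theta> j i"
    and "\<And>\<alpha>. moyal_elem U (X \<alpha>)"
    and "\<And>i j. moyal_elem U (ginv i j)"
    and "\<And>i k. eqU U (msum (\<lambda>j. mstar \<theta> (metric \<theta> X i j) (ginv j k)) UNIV)
                        (if i = k then mone else mzero)"
    and "\<And>i k. eqU U (msum (\<lambda>j. mstar \<theta> (ginv i j) (metric \<theta> X j k)) UNIV)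
                        (if i = k then mone else mzero)"
  shows "(\<forall>i j \<beta>. eqU U (nabla \<theta> X ginv i (Evec X j) \<beta>)
              (msum (\<lambda>k. mstar \<theta> (Gamma_up \<theta> X ginv i j k) (Evec X k \<beta>)) UNIV))
       \<and> (\<forall>i j \<alpha>. eqU U (nablat \<theta> X ginv i (Etil \<theta> X ginv j) \<alpha>)
              (mneg (msum (\<lambda>k. mstar \<theta> (Etil \<theta> X ginv k \<alpha>) (Gamma_up \<theta> X ginv k i j)) UNIV)))
       \<and> (\<forall>i j \<beta>. eqU U (nabla \<theta> X ginv i (Eup \<theta> X ginv j) \<beta>)
              (mneg (msum (\<lambda>k. mstar \<theta> (Gammat_up \<theta> X ginv i k j) (Eup \<theta> X ginv k \<beta>)) UNIV)))
       \<and> (\<forall>i j \<alpha>. eqU U (nablat \<theta> X ginv i (Evec X j) \<alpha>)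
              (msum (\<lambda>k. mstar \<theta> (Evec X k \<alpha>) (Gammat_up \<theta> X ginv i j k)) UNIV))"
proof -
  interpret moyal_on U \<theta> by unfold_locales (rule assms(1))
  interpret G: embedded_space U \<theta> "\<lambda>\<alpha>. zero_off U (X \<alpha>)" "\<lambda>i j. zero_off U (ginv i j)"
    by (rule embedded_space_zero_off[OF assms(1,3-6)])
  note defs = nabla_def nablat_def Evec_def Etil_def Eup_def eproj_def Gamma_up_def Gammat_up_def
    Gamma_low_def Gammat_low_def cGamma_def Upsilon_def metric_def
    G.nab_def G.nabt_def G.E_def G.Et_def G.Eu_def G.e_def G.g_def G.Gu_def G.Gtu_def
    G.Gl_def G.Gtl_def G.cG_def G.Ups_def
  show ?thesis
  proof (intro conjI allI)
    show "eqU U (nabla \<theta> X ginv i (Evec X j) \<beta>)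
        (msum (\<lambda>k. mstar \<theta> (Gamma_up \<theta> X ginv i j k) (Evec X k \<beta>)) UNIV)" for i j \<beta>
      using G.nab_E[of i j \<beta>] unfolding eqU_iff defs by (simp only: zero_off_simps)
    show "eqU U (nablat \<theta> X ginv i (Etil \<theta> X ginv j) \<alpha>)
        (mneg (msum (\<lambda>k. mstar \<theta> (Etil \<theta> X ginv k \<alpha>) (Gamma_up \<theta> X ginv k i j)) UNIV))" for i j \<alpha>
      using G.nabt_Et[of i j \<alpha>] unfolding eqU_iff defs by (simp only: zero_off_simps)
    show "eqU U (nabla \<theta> X ginv i (Eup \<theta> X ginv j) \<beta>)
        (mneg (msum (\<lambda>k. mstar \<theta> (Gammat_up \<theta> X ginv i k j) (Eup \<theta> X ginv k \<beta>)) UNIV))" for i j \<beta>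
      using G.nab_Eu[of i j \<beta>] unfolding eqU_iff defs by (simp only: zero_off_simps)
    show "eqU U (nablat \<theta> X ginv i (Evec X j) \<alpha>)
        (msum (\<lambda>k. mstar \<theta> (Evec X k \<alpha>) (Gammat_up \<theta> X ginv i j k)) UNIV)" for i j \<alpha>
      using G.nabt_E[of i j \<alpha>] unfolding eqU_iff defs by (simp only: zero_off_simps)
  qed
qed

end
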